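(* Fix $\alpha\in\mathbb{R}$ and suppose $Q_\alpha$ satisfies assumption (H). Fix $N\ge1$, $n\ge1$, $1\le m\le n$, $x\in\mathsf{X}$ and $\delta\in(0,1)$. Run the particle system with $Q=Q_\alpha$ (and arbitrary initial $\mu$) up to time $2n$ and, conditionally on $\mathcal{F}_{2n}$, let $(\check X_p;p=0,\dots,m)$ be a non-homogeneous Markov chain with $\check X_0=x$ and $\check X_p\sim P^N_{(n+p,2n)}(\check X_{p-1},\cdot)$ for $p\ge1$. Writing $\check{\mathbb{E}}_N$ for expectation under the joint law of the particle system and $(\check X_p)$, \[ \check{\mathbb{E}}_N\left[\mathbb{I}\Big[\sum_{p=1}^mU(\check X_p)>m\delta\Big]\prod_{p=0}^{m-1}\frac{\lambda^N_{n+p}}{G_\alpha(\check X_p)}\cdot\frac{h^N_{n,2n}(\check X_0)}{h^N_{n+m,2n}(\check X_m)}\right]=\pi_m(\delta), \] where $\pi_m(\delta):=\mathbb{P}_x\left(\sum_{p=1}^mU(X_p)>m\delta\right)$ for a Markov chain $(X_p)$ with transition kernel $M$ started at $X_0=x$.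
   Context: Setting: $(\mathsf{X},\mathcal{B})$ is a measurable space with countably generated $\sigma$-algebra; $\mathcal{P}$ the probability measures. For a measure $\mu$, kernel $K$, function $\varphi$: $\mu(\varphi)=\int\varphi\,d\mu$, $K(\varphi)(x)=\int K(x,dy)\varphi(y)$, $\mu K(\cdot)=\int\mu(dx)K(x,\cdot)$; $1$ the constant function one. $M$ is a Markov kernel, $U:\mathsf{X}\to[-1,1]$ measurable, $G_\alpha(x):=e^{\alpha U(x)}$ and $Q_\alpha(x,dy):=G_\alpha(x)M(x,dy)$. Assumption (H) for a kernel $Q$: there is a probability measure $\nu$ such that for all $x$, $Q(x,\cdot)$ is equivalent to $\nu$ with density $q(x,x')$ satisfying $\epsilon^-\le q\le\epsilon^+$ for constants $0<\epsilon^-,\epsilon^+<\infty$. With $Q=Q_\alpha$ and $G=G_\alpha$: for $\eta\in\mathcal{P}$, $\Phi(\eta):=\eta Q/\eta Q(1)$. Particle system: fix $N\ge1$, $\mu\in\mathcal{P}$; $\zeta_0^1,\dots,\zeta_0^N$ i.i.d. $\mu$; for $k\ge1$, conditionally on the past, the $\zeta_k^i$ are i.i.d. with law $\Phi(\eta^N_{k-1})$, where $\eta_k^N:=\frac1N\sum_{i=1}^N\delta_{\zeta_k^i}$; $\mathcal{F}_k:=\sigma(\zeta_0,\dots,\zeta_k)$. Define $\lambda_k^N:=\eta_k^N(G)$, $Q_k^N(x,dx'):=\frac{dQ(x,\cdot)}{d\Phi(\eta_{k-1}^N)}(x')\,\eta_k^N(dx')$ for $k\ge1$, $Q^N_{k,k}:=Id$,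 $Q^N_{p,k}:=Q^N_{p+1}\cdots Q^N_k$ for $p<k$, $h^N_{k,k}:=1$, $h_{p,k}^N(x):=\frac{Q^N_{p,k}(1)(x)}{\eta^N_pQ^N_{p,k}(1)}$ for $0\le p<k$, and for $1\le p\le k$ the random Markov kernel $P^N_{(p,k)}(x,dx'):=\frac{Q^N_p(x,dx')h^N_{p,k}(x')}{\lambda^N_{p-1}h^N_{p-1,k}(x)}$. *)

theory Defs
  imports "HOL-Probability.Probability"
begin

definition countably_generated_space :: "'a measure \<Rightarrow> bool" where
  "countably_generated_space S \<longleftrightarrow>
     (\<exists>C. countable C \<and> C \<subseteq> Pow (space S) \<and> sets S = sigma_sets (space S) C)"

text \<open>Q(x,dy) = G(x) M(x,dy); assumption (H): Q(x,.) has density q(x,.) w.r.t. a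
  probability measure nu, with eps_minus \<le> q \<le> eps_plus. The density is taken
  jointly measurable (a version which exists since sets S is countably generated).\<close>
definition assumption_H ::
  "'a measure \<Rightarrow> ('a \<Rightarrow> 'a measure) \<Rightarrow> ('a \<Rightarrow> real) \<Rightarrow> 'a measure \<Rightarrow> ('a \<Rightarrow> 'a \<Rightarrow> real) \<Rightarrow> bool" where
  "assumption_H S M G \<nu> q \<longleftrightarrow>
     prob_space \<nu> \<and> sets \<nu> = sets S \<and>
     (\<lambda>(x, y). q x y) \<in> borel_measurable (S \<Otimes>\<^sub>M S) \<and>
     (\<exists>em ep. 0 < em \<and> 0 < ep \<and> (\<forall>x\<in>space S. \<forall>y\<in>space S. em \<le> q x y \<and> q x y \<le> ep)) \<and>
     (\<forall>x\<in>space S. \<forall>A\<in>sets S. G x * measure (M x) A = (\<integral>y\<in>A. q x y \<partial>\<nu>))"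

text \<open>A configuration of N particles is z :: nat => 'a (particles z 0, ..., z (N-1)).\<close>
definition eta :: "nat \<Rightarrow> (nat \<Rightarrow> 'a) \<Rightarrow> ('a \<Rightarrow> real) \<Rightarrow> real" where
  "eta N z f = (\<Sum>i<N. f (z i)) / real N"

definition Phi :: "'a measure \<Rightarrow> ('a \<Rightarrow> 'a measure) \<Rightarrow> ('a \<Rightarrow> real) \<Rightarrow> nat \<Rightarrow> (nat \<Rightarrow> 'a) \<Rightarrow> 'a measure" where
  "Phi S M G N z = measure_of (space S) (sets S)
     (\<lambda>A. ennreal (eta N z (\<lambda>y. G y * measure (M y) A) / eta N z G))"

text \<open>Paths of the particle system: w :: nat => nat => 'a, w k i = zeta_k^i,
  with law on PiM {..k} (\<lambda>_. PiM {..<N} (\<lambda>_. S)).\<close>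
fun particle_law :: "'a measure \<Rightarrow> 'a measure \<Rightarrow> ('a \<Rightarrow> 'a measure) \<Rightarrow> ('a \<Rightarrow> real) \<Rightarrow> nat \<Rightarrow> nat
     \<Rightarrow> (nat \<Rightarrow> nat \<Rightarrow> 'a) measure" where
  "particle_law S \<mu> M G N 0 =
     distr (PiM {..<N} (\<lambda>_. \<mu>)) (PiM {..0} (\<lambda>_. PiM {..<N} (\<lambda>_. S))) (\<lambda>z. \<lambda>k\<in>{..0}. z)"
| "particle_law S \<mu> M G N (Suc k) =
     bind (particle_law S \<mu> M G N k) (\<lambda>w.
       distr (PiM {..<N} (\<lambda>_. Phi S M G N (w k))) (PiM {..Suc k} (\<lambda>_. PiM {..<N} (\<lambda>_. S)))
         (\<lambda>z. \<lambda>i\<in>{..Suc k}. if i = Suc k then z else w i))"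

definition lam :: "nat \<Rightarrow> ('a \<Rightarrow> real) \<Rightarrow> (nat \<Rightarrow> nat \<Rightarrow> 'a) \<Rightarrow> nat \<Rightarrow> real" where
  "lam N G w k = eta N (w k) G"

text \<open>Version of dQ(x,.)/dPhi(eta_{k-1}^N)(x') obtained from the density q of (H):
  q(x,x') eta_{k-1}(G) / eta_{k-1}(q(.,x')).\<close>
definition dens :: "nat \<Rightarrow> ('a \<Rightarrow> real) \<Rightarrow> ('a \<Rightarrow> 'a \<Rightarrow> real) \<Rightarrow> (nat \<Rightarrow> nat \<Rightarrow> 'a) \<Rightarrow> nat \<Rightarrow> 'a \<Rightarrow> 'a \<Rightarrow> real" where
  "dens N G q w k x x' = q x x' * eta N (w (k - 1)) G / eta N (w (k - 1)) (\<lambda>y. q y x')"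

definition Qop :: "nat \<Rightarrow> ('a \<Rightarrow> real) \<Rightarrow> ('a \<Rightarrow> 'a \<Rightarrow> real) \<Rightarrow> (nat \<Rightarrow> nat \<Rightarrow> 'a) \<Rightarrow> nat
     \<Rightarrow> ('a \<Rightarrow> real) \<Rightarrow> 'a \<Rightarrow> real" where
  "Qop N G q w k f x = eta N (w k) (\<lambda>x'. dens N G q w k x x' * f x')"

text \<open>Qcomp ... k d = Q_{k-d,k}^N = Q_{k-d+1} ... Q_k (identity for d = 0).\<close>
primrec Qcomp :: "nat \<Rightarrow> ('a \<Rightarrow> real) \<Rightarrow> ('a \<Rightarrow> 'a \<Rightarrow> real) \<Rightarrow> (nat \<Rightarrow> nat \<Rightarrow> 'a) \<Rightarrow> nat \<Rightarrow> nat
     \<Rightarrow> ('a \<Rightarrow> real) \<Rightarrow> 'a \<Rightarrow> real" where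
  "Qcomp N G q w k 0 f = f"
| "Qcomp N G q w k (Suc d) f = Qop N G q w (k - d) (Qcomp N G q w k d f)"

definition Qpk :: "nat \<Rightarrow> ('a \<Rightarrow> real) \<Rightarrow> ('a \<Rightarrow> 'a \<Rightarrow> real) \<Rightarrow> (nat \<Rightarrow> nat \<Rightarrow> 'a) \<Rightarrow> nat \<Rightarrow> nat
     \<Rightarrow> ('a \<Rightarrow> real) \<Rightarrow> 'a \<Rightarrow> real" where
  "Qpk N G q w p k = Qcomp N G q w k (k - p)"

definition hpk :: "nat \<Rightarrow> ('a \<Rightarrow> real) \<Rightarrow> ('a \<Rightarrow> 'a \<Rightarrow> real) \<Rightarrow> (nat \<Rightarrow> nat \<Rightarrow> 'a) \<Rightarrow> nat \<Rightarrow> nat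
     \<Rightarrow> 'a \<Rightarrow> real" where
  "hpk N G q w p k x =
     (if p = k then 1
      else Qpk N G q w p k (\<lambda>_. 1) x / eta N (w p) (Qpk N G q w p k (\<lambda>_. 1)))"

text \<open>P_{(p,k)}^N(x,dx') = Q_p^N(x,dx') h_{p,k}(x') / (lambda_{p-1} h_{p-1,k}(x)); since
  Q_p^N(x,.) is carried by the particles zeta_p^j, this is the discrete law putting mass
  (1/N) dens(x,zeta_p^j) h_{p,k}(zeta_p^j) / (lambda_{p-1} h_{p-1,k}(x)) on zeta_p^j.\<close>
definition Pker :: "nat \<Rightarrow> ('a \<Rightarrow> real) \<Rightarrow> ('a \<Rightarrow> 'a \<Rightarrow> real) \<Rightarrow> (nat \<Rightarrow> nat \<Rightarrow> 'a) \<Rightarrow> nat \<Rightarrow> nat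
     \<Rightarrow> 'a \<Rightarrow> 'a pmf" where
  "Pker N G q w p k x = map_pmf (w p) (embed_pmf (\<lambda>j. if j < N then
       dens N G q w p x (w p j) * hpk N G q w p k (w p j)
         / (real N * lam N G w (p - 1) * hpk N G q w (p - 1) k x)
     else 0))"

primrec check_chain :: "nat \<Rightarrow> ('a \<Rightarrow> real) \<Rightarrow> ('a \<Rightarrow> 'a \<Rightarrow> real) \<Rightarrow> (nat \<Rightarrow> nat \<Rightarrow> 'a) \<Rightarrow> nat
     \<Rightarrow> 'a \<Rightarrow> nat \<Rightarrow> (nat \<Rightarrow> 'a) pmf" where
  "check_chain N G q w n x 0 = return_pmf (\<lambda>_. x)"
| "check_chain N G q w n x (Suc p) =
     bind_pmf (check_chain N G q w n x p)
       (\<lambda>xs. map_pmf (\<lambda>y. xs(Suc p := y)) (Pker N G q w (n + Suc p) (2 * n) (xs p)))"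

fun markov_path :: "'a measure \<Rightarrow> ('a \<Rightarrow> 'a measure) \<Rightarrow> 'a \<Rightarrow> nat \<Rightarrow> (nat \<Rightarrow> 'a) measure" where
  "markov_path S M x 0 = return (PiM {..0} (\<lambda>_. S)) (\<lambda>i\<in>{..0}. x)"
| "markov_path S M x (Suc k) =
     bind (markov_path S M x k) (\<lambda>w.
       distr (M (w k)) (PiM {..Suc k} (\<lambda>_. S)) (\<lambda>y. \<lambda>i\<in>{..Suc k}. if i = Suc k then y else w i))"

definition pi_m :: "'a measure \<Rightarrow> ('a \<Rightarrow> 'a measure) \<Rightarrow> ('a \<Rightarrow> real) \<Rightarrow> 'a \<Rightarrow> nat \<Rightarrow> real \<Rightarrow> real" where
  "pi_m S M U x m \<delta> = measure (markov_path S M x m)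
     {w \<in> space (markov_path S M x m). (\<Sum>p=1..m. U (w p)) > real m * \<delta>}"

end

theory Submission
  imports Defs
begin

(* Both sides are evaluated explicitly, with t = m delta.
   (1) pi_m(delta) = exceed t m x 0, where exceed t r y s is the probability that
       s + U(X_1) + ... + U(X_r) > t for the M-chain started at y; it obeys the backward
       recursion  exceed t (r+1) y s = int exceed t r z (s + U z) M(y, dz).
   (2) For a fixed particle path, the weighted expectation under the backward chain
       P^N_(n+p,2n) equals the m-fold composition, over the generations n+1, ..., n+m, of the
       random kernels
         particle_step_k g (y, s) = 1/N sum_j dens_k(y, zeta_k^j) / G(y) * g(zeta_k^j, s + U zeta_k^j)
       applied to exceed t 0: the backward weights sum to one and the h-factors telescope.
   (3) Under (H), Phi(eta) has density eta(q(., y')) / eta(G) with respect to nu, which cancels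
       the normalisation in dens_k; hence averaging particle_step_k over the fresh generation
       zeta_k ~ Phi(eta_(k-1))^N gives exactly M. Generations after n+m do not enter, and
       integrating out the generations n+m, ..., n+1 one at a time turns the composition
       of particle kernels into exceed t m. The theorem chains the three steps. *)

lemma integral_measurable_kernel:
  fixes f :: "_ \<Rightarrow> _ \<Rightarrow> real"
  assumes f[measurable]: "(\<lambda>(x, y). f x y) \<in> borel_measurable (M \<Otimes>\<^sub>M N)"
    and L[measurable]: "L \<in> measurable M (subprob_algebra N)"
  shows "(\<lambda>x. integral\<^sup>L (L x) (f x)) \<in> borel_measurable M"
proof -
  note integral_measurable_subprob_algebra[measurable] measurable_distr2[measurable]
  have "(\<lambda>x. integral\<^sup>L (distr (L x) (M \<Otimes>\<^sub>M N) (\<lambda>y. (x, y))) (\<lambda>(x, y). f x y)) \<in> borel_measurable M"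
    by measurable
  then show ?thesis
    by (rule measurable_cong[THEN iffD1, rotated]) (simp add: integral_distr)
qed

abbreviation extend_path :: "nat \<Rightarrow> (nat \<Rightarrow> 'b) \<Rightarrow> 'b \<Rightarrow> nat \<Rightarrow> 'b" where
  "extend_path k w y \<equiv> \<lambda>i\<in>{..Suc k}. if i = Suc k then y else w i"

lemma extend_path_measurable:
  "(\<lambda>(w, y). extend_path k w y) \<in> (PiM {..k} (\<lambda>_. X) \<Otimes>\<^sub>M X) \<rightarrow>\<^sub>M PiM {..Suc k} (\<lambda>_. X)"
proof -
  have "(\<lambda>p. \<lambda>i\<in>{..Suc k}. if i = Suc k then snd p else fst p i)
      \<in> (PiM {..k} (\<lambda>_. X) \<Otimes>\<^sub>M X) \<rightarrow>\<^sub>M PiM {..Suc k} (\<lambda>_. X)"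
  proof (rule measurable_restrict)
    fix i assume "i \<in> {..Suc k}"
    then show "(\<lambda>p. if i = Suc k then snd p else fst p i) \<in> (PiM {..k} (\<lambda>_. X) \<Otimes>\<^sub>M X) \<rightarrow>\<^sub>M X"
      by (cases "i = Suc k") auto
  qed
  then show ?thesis by (simp add: case_prod_beta')
qed

lemma bind_extend_path:
  fixes f :: "_ \<Rightarrow> real"
  assumes P: "prob_space P" "sets P = sets (PiM {..k} (\<lambda>_. X))"
    and K: "K \<in> PiM {..k} (\<lambda>_. X) \<rightarrow>\<^sub>M prob_algebra X"
  defines "B \<equiv> bind P (\<lambda>w. distr (K w) (PiM {..Suc k} (\<lambda>_. X)) (extend_path k w))"
  shows "sets B = sets (PiM {..Suc k} (\<lambda>_. X))" and "prob_space B"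
    and "f \<in> borel_measurable (PiM {..Suc k} (\<lambda>_. X)) \<Longrightarrow>
      (\<And>w. w \<in> space (PiM {..Suc k} (\<lambda>_. X)) \<Longrightarrow> \<bar>f w\<bar> \<le> c) \<Longrightarrow>
      (\<integral>w. f w \<partial>B) = (\<integral>w. (\<integral>y. f (extend_path k w y) \<partial>K w) \<partial>P)"
proof -
  let ?L = "\<lambda>w. distr (K w) (PiM {..Suc k} (\<lambda>_. X)) (extend_path k w)"
  have L: "?L \<in> PiM {..k} (\<lambda>_. X) \<rightarrow>\<^sub>M prob_algebra (PiM {..Suc k} (\<lambda>_. X))"
    using K extend_path_measurable by (rule measurable_distr_prob_space2)
  have P_alg: "P \<in> space (prob_algebra (PiM {..k} (\<lambda>_. X)))"
    using P by (simp add: space_prob_algebra)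
  show "sets B = sets (PiM {..Suc k} (\<lambda>_. X))" "prob_space B"
    unfolding B_def using sets_bind'[OF P_alg L] prob_space_bind'[OF P_alg L] by auto
  assume f[measurable]: "f \<in> borel_measurable (PiM {..Suc k} (\<lambda>_. X))"
    and fb: "\<And>w. w \<in> space (PiM {..Suc k} (\<lambda>_. X)) \<Longrightarrow> \<bar>f w\<bar> \<le> c"
  interpret P: prob_space P by (rule P(1))
  have L': "?L \<in> P \<rightarrow>\<^sub>M subprob_algebra (PiM {..Suc k} (\<lambda>_. X))"
    using measurable_prob_algebraD[OF L] P(2) by (simp cong: measurable_cong_sets)
  have "(\<integral>w. f w \<partial>B) = (\<integral>w. integral\<^sup>L (?L w) f \<partial>P)"
    unfolding B_def
  proof (rule integral_bind[OF f fb L' P.finite_measure AE_I2])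
    fix w assume "w \<in> space P"
    then have "?L w \<in> space (subprob_algebra (PiM {..Suc k} (\<lambda>_. X)))" by (rule measurable_space[OF L'])
    then show "emeasure (?L w) (space (?L w)) \<le> ennreal 1"
      by (auto simp: space_subprob_algebra dest: subprob_space.subprob_emeasure_le_1)
  qed
  also have "\<dots> = (\<integral>w. (\<integral>y. f (extend_path k w y) \<partial>K w) \<partial>P)"
  proof (rule Bochner_Integration.integral_cong[OF refl])
    fix w assume "w \<in> space P"
    then have w: "w \<in> space (PiM {..k} (\<lambda>_. X))" using sets_eq_imp_space_eq[OF P(2)] by simp
    have "sets (K w) = sets X" using measurable_space[OF K w] by (simp add: space_prob_algebra)
    then have "extend_path k w \<in> K w \<rightarrow>\<^sub>M PiM {..Suc k} (\<lambda>_. X)"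
      using measurable_Pair2[OF extend_path_measurable[of k X] w] by (simp cong: measurable_cong_sets)
    then show "integral\<^sup>L (?L w) f = (\<integral>y. f (extend_path k w y) \<partial>K w)"
      by (rule integral_distr) (rule f)
  qed
  finally show "(\<integral>w. f w \<partial>B) = (\<integral>w. (\<integral>y. f (extend_path k w y) \<partial>K w) \<partial>P)" .
qed

lemma sum_extend_last:
  assumes "\<And>i. 1 \<le> i \<Longrightarrow> i \<le> k \<Longrightarrow> w' i = w i"
  shows "(\<Sum>p=1..Suc k. f (w' p)) = (\<Sum>p=1..k. f (w p)) + f (w' (Suc k))"
proof -
  have "(\<Sum>p=1..k. f (w' p)) = (\<Sum>p=1..k. f (w p))" using assms by (intro sum.cong) auto
  then show ?thesis by simp
qed

lemma eta_pos: "N \<ge> 1 \<Longrightarrow> (\<And>i. i < N \<Longrightarrow> 0 < f (z i)) \<Longrightarrow> 0 < eta N z f"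
  unfolding eta_def by (intro divide_pos_pos sum_pos) (auto simp: lessThan_empty_iff)

lemma eta_const[simp]: "N \<ge> 1 \<Longrightarrow> eta N z (\<lambda>_. c) = c"
  unfolding eta_def by simp

lemma eta_div: "eta N z (\<lambda>x. f x / c) = eta N z f / c"
  unfolding eta_def by (simp add: sum_divide_distrib mult_ac)

lemma eta_le: "N \<ge> 1 \<Longrightarrow> (\<And>i. i < N \<Longrightarrow> f (z i) \<le> c) \<Longrightarrow> eta N z f \<le> c"
  unfolding eta_def using sum_mono[of "{..<N}" "\<lambda>i. f (z i)" "\<lambda>_. c"]
  by (simp add: divide_le_eq mult.commute)

lemma eta_ge: "N \<ge> 1 \<Longrightarrow> (\<And>i. i < N \<Longrightarrow> c \<le> f (z i)) \<Longrightarrow> c \<le> eta N z f"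
  unfolding eta_def using sum_mono[of "{..<N}" "\<lambda>_. c" "\<lambda>i. f (z i)"]
  by (simp add: le_divide_eq mult.commute)

lemma integral_PiM_sum_components:
  fixes c :: "'a \<Rightarrow> real"
  assumes P: "prob_space P" and c: "integrable P c"
  shows "integrable (PiM {..<N} (\<lambda>_. P)) (\<lambda>z. \<Sum>j<N. c (z j))"
    and "(\<integral>z. (\<Sum>j<N. c (z j)) \<partial>PiM {..<N} (\<lambda>_. P)) = real N * (\<integral>y. c y \<partial>P)"
proof -
  have cm[measurable]: "c \<in> borel_measurable P" using c by auto
  have comp: "(\<lambda>z. z j) \<in> PiM {..<N} (\<lambda>_. P) \<rightarrow>\<^sub>M P"
    and law: "distr (PiM {..<N} (\<lambda>_. P)) P (\<lambda>z. z j) = P" if "j < N" for j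
    using measurable_component_singleton[of j "{..<N}" "\<lambda>_. P"]
      distr_PiM_component[of "{..<N}" "\<lambda>_. P" j] P that by simp_all
  have int: "integrable (PiM {..<N} (\<lambda>_. P)) (\<lambda>z. c (z j))" if "j < N" for j
    using integrable_distr_eq[OF comp[OF that] cm] law[OF that] c by simp
  then show "integrable (PiM {..<N} (\<lambda>_. P)) (\<lambda>z. \<Sum>j<N. c (z j))" by auto
  have "(\<integral>z. (\<Sum>j<N. c (z j)) \<partial>PiM {..<N} (\<lambda>_. P)) = (\<Sum>j<N. \<integral>z. c (z j) \<partial>PiM {..<N} (\<lambda>_. P))"
    using int by (intro Bochner_Integration.integral_sum) auto
  also have "\<dots> = (\<Sum>j<N. \<integral>y. c y \<partial>P)"
    using integral_distr[OF comp cm] law by (intro sum.cong) auto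
  finally show "(\<integral>z. (\<Sum>j<N. c (z j)) \<partial>PiM {..<N} (\<lambda>_. P)) = real N * (\<integral>y. c y \<partial>P)" by simp
qed

lemma expectation_cong_pmf:
  "(\<And>x. x \<in> set_pmf p \<Longrightarrow> f x = g x) \<Longrightarrow> measure_pmf.expectation p f = measure_pmf.expectation p (g :: _ \<Rightarrow> real)"
  by (intro integral_cong_AE) (auto simp: AE_measure_pmf_iff)

lemma expectation_bind_pmf_finite:
  fixes g :: "'b \<Rightarrow> real"
  assumes fin: "finite (set_pmf p)" and fin2: "\<And>x. x \<in> set_pmf p \<Longrightarrow> finite (set_pmf (f x))"
  shows "measure_pmf.expectation (bind_pmf p f) g = measure_pmf.expectation p (\<lambda>x. measure_pmf.expectation (f x) g)"
  using pmf_expectation_bind[OF fin fin2 subset_refl, where h=g]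
    integral_measure_pmf_real[OF fin, where f="\<lambda>x. measure_pmf.expectation (f x) g"]
  by (simp add: mult.commute)

lemma embed_pmf_finite_weights:
  fixes f :: "nat \<Rightarrow> real"
  assumes nn: "\<And>j. 0 \<le> f j" and zero: "\<And>j. j \<ge> N \<Longrightarrow> f j = 0" and one: "(\<Sum>j<N. f j) = 1"
  shows "measure_pmf.expectation (map_pmf h (embed_pmf f)) (\<phi> :: _ \<Rightarrow> real) = (\<Sum>j<N. f j * \<phi> (h j))"
    and "set_pmf (map_pmf h (embed_pmf f)) \<subseteq> h ` {..<N}"
proof -
  have "(\<integral>\<^sup>+x. ennreal (f x) \<partial>count_space UNIV) = (\<Sum>j<N. ennreal (f j))"
    by (rule nn_integral_count_space') (use zero in \<open>auto simp: not_less\<close>)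
  also have "\<dots> = 1" using nn one by (simp add: sum_ennreal)
  finally have prob: "(\<integral>\<^sup>+x. ennreal (f x) \<partial>count_space UNIV) = 1" .
  have supp: "set_pmf (embed_pmf f) \<subseteq> {..<N}"
    using set_embed_pmf[OF nn prob] zero by (auto simp: not_less[symmetric])
  then show "set_pmf (map_pmf h (embed_pmf f)) \<subseteq> h ` {..<N}" by auto
  have "measure_pmf.expectation (embed_pmf f) (\<lambda>j. \<phi> (h j)) = (\<Sum>j<N. \<phi> (h j) * pmf (embed_pmf f) j)"
    by (rule integral_measure_pmf_real) (use supp in auto)
  then show "measure_pmf.expectation (map_pmf h (embed_pmf f)) \<phi> = (\<Sum>j<N. f j * \<phi> (h j))"
    by (simp add: pmf_embed_pmf[OF nn prob] mult.commute)
qed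

locale fk_setting =
  fixes S :: "'a measure" and M :: "'a \<Rightarrow> 'a measure" and U :: "'a \<Rightarrow> real"
    and \<alpha> :: real and \<nu> :: "'a measure" and q :: "'a \<Rightarrow> 'a \<Rightarrow> real" and N :: nat
    and q_lo q_hi :: real
  assumes M_kernel: "M \<in> S \<rightarrow>\<^sub>M prob_algebra S"
    and U_meas[measurable]: "U \<in> borel_measurable S"
    and U_bound: "\<And>y. y \<in> space S \<Longrightarrow> \<bar>U y\<bar> \<le> 1"
    and nu_prob: "prob_space \<nu>" and sets_nu: "sets \<nu> = sets S"
    and q_meas: "(\<lambda>(x, y). q x y) \<in> borel_measurable (S \<Otimes>\<^sub>M S)"
    and q_lo_pos: "0 < q_lo" and q_hi_pos: "0 < q_hi"
    and q_bounds: "\<And>x y. x \<in> space S \<Longrightarrow> y \<in> space S \<Longrightarrow> q_lo \<le> q x y \<and> q x y \<le> q_hi"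
    and q_density: "\<And>x A. x \<in> space S \<Longrightarrow> A \<in> sets S \<Longrightarrow>
      exp (\<alpha> * U x) * measure (M x) A = (\<integral>y\<in>A. q x y \<partial>\<nu>)"
    and N_pos: "1 \<le> N"
begin

abbreviation G :: "'a \<Rightarrow> real" where "G \<equiv> \<lambda>y. exp (\<alpha> * U y)"

section \<open>The kernel \<open>M\<close> under assumption (H)\<close>

lemma q_pos: "x \<in> space S \<Longrightarrow> y \<in> space S \<Longrightarrow> 0 < q x y"
  using q_bounds q_lo_pos by (meson order_less_le_trans)

lemma space_nu: "space \<nu> = space S"
  using sets_nu by (rule sets_eq_imp_space_eq)

lemma q_measurable[measurable]:
  "f \<in> X \<rightarrow>\<^sub>M S \<Longrightarrow> g \<in> X \<rightarrow>\<^sub>M S \<Longrightarrow> (\<lambda>w. q (f w) (g w)) \<in> borel_measurable X"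
  using measurable_compose[OF measurable_Pair q_meas] by simp

lemma q_measurable_nu[measurable]: "y \<in> space S \<Longrightarrow> q y \<in> borel_measurable \<nu>"
  by (subst measurable_cong_sets[OF sets_nu refl]) (rule q_measurable, auto)

lemma M_prob: "y \<in> space S \<Longrightarrow> prob_space (M y)"
  and sets_M: "y \<in> space S \<Longrightarrow> sets (M y) = sets S"
  using measurable_space[OF M_kernel] by (auto simp: space_prob_algebra)

lemma space_M: "y \<in> space S \<Longrightarrow> space (M y) = space S"
  using sets_M by (rule sets_eq_imp_space_eq)

lemma G_bounds: "y \<in> space S \<Longrightarrow> exp (- \<bar>\<alpha>\<bar>) \<le> G y \<and> G y \<le> exp \<bar>\<alpha>\<bar>"
proof -
  assume "y \<in> space S"
  then have "\<bar>\<alpha> * U y\<bar> \<le> \<bar>\<alpha>\<bar>" using U_bound by (simp add: abs_mult mult_left_le)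
  then have "- \<bar>\<alpha>\<bar> \<le> \<alpha> * U y \<and> \<alpha> * U y \<le> \<bar>\<alpha>\<bar>" by linarith
  then show ?thesis by simp
qed

lemma q_integrable:
  fixes B :: real
  assumes y: "y \<in> space S" and g: "g \<in> borel_measurable \<nu>" and gb: "\<And>z. z \<in> space S \<Longrightarrow> \<bar>g z\<bar> \<le> B"
  shows "integrable \<nu> (\<lambda>z. q y z * g z)"
proof -
  interpret prob_space \<nu> by (rule nu_prob)
  have qm: "q y \<in> borel_measurable \<nu>" by (rule q_measurable_nu[OF y])
  show ?thesis
  proof (rule integrable_const_bound[where B="q_hi * B"])
    show "(\<lambda>z. q y z * g z) \<in> borel_measurable \<nu>" using qm g by measurable
    show "AE z in \<nu>. norm (q y z * g z) \<le> q_hi * B"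
    proof (rule AE_I2)
      fix z assume "z \<in> space \<nu>"
      then have z: "z \<in> space S" by (simp add: space_nu)
      have "\<bar>q y z\<bar> * \<bar>g z\<bar> \<le> q_hi * B"
        using q_bounds[OF y z] q_pos[OF y z] gb[OF z] by (intro mult_mono) auto
      then show "norm (q y z * g z) \<le> q_hi * B" by (simp add: abs_mult)
    qed
  qed
qed

lemma M_density:
  assumes y: "y \<in> space S"
  shows "M y = density \<nu> (\<lambda>z. ennreal (q y z / G y))"
proof (rule measure_eqI)
  show "sets (M y) = sets (density \<nu> (\<lambda>z. ennreal (q y z / G y)))"
    using sets_M[OF y] sets_nu by simp
next
  fix A assume "A \<in> sets (M y)"
  then have AS: "A \<in> sets S" and An: "A \<in> sets \<nu>" using sets_M[OF y] sets_nu by auto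
  have int: "integrable \<nu> (\<lambda>z. q y z * (indicator A z / G y))"
    by (rule q_integrable[OF y, where B="1 / G y"]) (use An in \<open>auto simp: indicator_def\<close>)
  have "emeasure (density \<nu> (\<lambda>z. ennreal (q y z / G y))) A =
      (\<integral>\<^sup>+ z. ennreal (q y z / G y) * indicator A z \<partial>\<nu>)"
    using y An by (subst emeasure_density) auto
  also have "\<dots> = (\<integral>\<^sup>+ z. ennreal (q y z * (indicator A z / G y)) \<partial>\<nu>)"
    by (intro nn_integral_cong) (auto simp: indicator_def)
  also have "\<dots> = ennreal (\<integral> z. q y z * (indicator A z / G y) \<partial>\<nu>)"
    using y by (intro nn_integral_eq_integral int AE_I2)
      (auto simp: space_nu indicator_def intro!: divide_nonneg_pos less_imp_le[OF q_pos])
  also have "(\<integral> z. q y z * (indicator A z / G y) \<partial>\<nu>) = measure (M y) A"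
    using q_density[OF y AS] by (simp add: set_lebesgue_integral_def mult.commute field_simps)
  finally show "emeasure (M y) A = emeasure (density \<nu> (\<lambda>z. ennreal (q y z / G y))) A"
    using finite_measure.emeasure_eq_measure[OF prob_space.finite_measure[OF M_prob[OF y]]] by simp
qed

lemma integral_M:
  assumes y: "y \<in> space S" and g: "g \<in> borel_measurable S"
  shows "(\<integral>z. g z \<partial>M y) = (\<integral>z. q y z * g z \<partial>\<nu>) / G y"
proof -
  have gn: "g \<in> borel_measurable \<nu>" using g sets_nu by (simp cong: measurable_cong_sets)
  have "(\<integral>z. g z \<partial>M y) = (\<integral>z. (q y z / G y) *\<^sub>R g z \<partial>\<nu>)"
    unfolding M_density[OF y] using y gn
    by (intro integral_density) (auto simp: space_nu intro!: AE_I2 divide_nonneg_pos less_imp_le[OF q_pos])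
  also have "\<dots> = (\<integral>z. (q y z * g z) / G y \<partial>\<nu>)"
    by (intro Bochner_Integration.integral_cong) auto
  also have "\<dots> = (\<integral>z. q y z * g z \<partial>\<nu>) / G y"
    by (rule integral_divide_zero)
  finally show ?thesis .
qed

section \<open>Exceedance probabilities of the \<open>M\<close>-chain\<close>

text \<open>\<open>exceed t r y s\<close> is the probability that \<open>s + U(X\<^sub>1) + \<dots> + U(X\<^sub>r) > t\<close> for the chain
  with kernel \<open>M\<close> started at \<open>y\<close>, defined by the backward recursion in \<open>r\<close>.\<close>
primrec exceed :: "real \<Rightarrow> nat \<Rightarrow> 'a \<Rightarrow> real \<Rightarrow> real" where
  "exceed t 0 y s = (if s > t then 1 else 0)"
| "exceed t (Suc r) y s = (\<integral>z. exceed t r z (s + U z) \<partial>M y)"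

lemma exceed_measurable_bounded:
  "(\<lambda>(y, s). exceed t r y s) \<in> borel_measurable (S \<Otimes>\<^sub>M borel) \<and>
   (\<forall>y\<in>space S. \<forall>s. 0 \<le> exceed t r y s \<and> exceed t r y s \<le> 1)"
proof (induction r)
  case 0
  show ?case by (auto simp: case_prod_beta')
next
  case (Suc r)
  have [measurable]: "(\<lambda>(y, s). exceed t r y s) \<in> borel_measurable (S \<Otimes>\<^sub>M borel)"
    and b: "\<And>y s. y \<in> space S \<Longrightarrow> 0 \<le> exceed t r y s \<and> exceed t r y s \<le> 1"
    using Suc by blast+
  have "(\<lambda>p. M (fst p)) \<in> (S \<Otimes>\<^sub>M borel) \<rightarrow>\<^sub>M subprob_algebra S"
    using measurable_compose[OF measurable_fst measurable_prob_algebraD[OF M_kernel]] .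
  then have "(\<lambda>p. \<integral>z. exceed t r z (snd p + U z) \<partial>M (fst p)) \<in> borel_measurable (S \<Otimes>\<^sub>M borel)"
    by (rule integral_measurable_kernel[rotated]) measurable
  moreover have "0 \<le> exceed t (Suc r) y s \<and> exceed t (Suc r) y s \<le> 1" if y: "y \<in> space S" for y s
  proof -
    interpret prob_space "M y" by (rule M_prob[OF y])
    have "integrable (M y) (\<lambda>z. exceed t r z (s + U z))"
      by (rule integrable_const_bound[where B=1])
        (use b space_M[OF y] sets_M[OF y] in \<open>auto cong: measurable_cong_sets\<close>)
    then have "(\<integral>z. exceed t r z (s + U z) \<partial>M y) \<le> (\<integral>z. 1 \<partial>M y)"
      by (intro integral_mono_AE) (use b space_M[OF y] in auto)
    moreover have "0 \<le> (\<integral>z. exceed t r z (s + U z) \<partial>M y)"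
      by (rule integral_nonneg_AE) (use b space_M[OF y] in auto)
    ultimately show ?thesis by (simp add: prob_space)
  qed
  ultimately show ?case by (simp add: case_prod_beta')
qed

lemma exceed_measurable[measurable]:
  "f \<in> X \<rightarrow>\<^sub>M S \<Longrightarrow> g \<in> borel_measurable X \<Longrightarrow> (\<lambda>w. exceed t r (f w) (g w)) \<in> borel_measurable X"
  using measurable_compose[OF measurable_Pair conjunct1[OF exceed_measurable_bounded], of f X g] by simp

lemma exceed_abs: "y \<in> space S \<Longrightarrow> \<bar>exceed t r y s\<bar> \<le> 1"
  using exceed_measurable_bounded[of t r] by fastforce

lemma M_last_measurable: "(\<lambda>w. M (w k)) \<in> PiM {..k::nat} (\<lambda>_. S) \<rightarrow>\<^sub>M prob_algebra S"
proof -
  have "(\<lambda>w. w k) \<in> PiM {..k} (\<lambda>_. S) \<rightarrow>\<^sub>M S" by (rule measurable_component_singleton) simp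
  from measurable_compose[OF this M_kernel] show ?thesis .
qed

lemma markov_path_prob:
  assumes x: "x \<in> space S"
  shows "sets (markov_path S M x k) = sets (PiM {..k} (\<lambda>_. S)) \<and> prob_space (markov_path S M x k)"
proof (induction k)
  case 0
  have "(\<lambda>i\<in>{..0::nat}. x) \<in> space (PiM {..0} (\<lambda>_. S))" using x by (simp add: space_PiM)
  then show ?case by (auto intro!: prob_space_return)
next
  case (Suc k)
  then show ?case using bind_extend_path(1,2)[OF _ _ M_last_measurable] by simp
qed

lemma markov_path_integral:
  fixes f :: "(nat \<Rightarrow> 'a) \<Rightarrow> real"
  assumes x: "x \<in> space S" and "f \<in> borel_measurable (PiM {..Suc k} (\<lambda>_. S))"
    and "\<And>w. w \<in> space (PiM {..Suc k} (\<lambda>_. S)) \<Longrightarrow> \<bar>f w\<bar> \<le> c"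
  shows "(\<integral>w. f w \<partial>markov_path S M x (Suc k)) =
    (\<integral>w. (\<integral>y. f (extend_path k w y) \<partial>M (w k)) \<partial>markov_path S M x k)"
proof -
  have P: "prob_space (markov_path S M x k)" "sets (markov_path S M x k) = sets (PiM {..k} (\<lambda>_. S))"
    using markov_path_prob[OF x] by auto
  show ?thesis using bind_extend_path(3)[OF P M_last_measurable assms(2,3)] by simp
qed

text \<open>The running sum along the chain turns the backward recursion into a forward one.\<close>
lemma markov_path_exceed:
  assumes x: "x \<in> space S"
  shows "k \<le> m \<Longrightarrow> (\<integral>w. exceed t (m - k) (w k) (\<Sum>p=1..k. U (w p)) \<partial>markov_path S M x k) = exceed t m x 0"
proof (induction k)
  case 0
  have "(\<lambda>i\<in>{..0::nat}. x) \<in> space (PiM {..0} (\<lambda>_. S))" using x by (simp add: space_PiM)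
  moreover have "(\<lambda>w. w 0) \<in> PiM {..0::nat} (\<lambda>_. S) \<rightarrow>\<^sub>M S"
    using measurable_component_singleton[of 0 "{..0}" "\<lambda>_. S"] by simp
  ultimately show ?case by (simp add: integral_return)
next
  case (Suc k)
  then have IH: "(\<integral>w. exceed t (m - k) (w k) (\<Sum>p=1..k. U (w p)) \<partial>markov_path S M x k) = exceed t m x 0"
    and mk: "m - k = Suc (m - Suc k)" by auto
  have "(\<integral>w. exceed t (m - Suc k) (w (Suc k)) (\<Sum>p=1..Suc k. U (w p)) \<partial>markov_path S M x (Suc k)) =
    (\<integral>w. (\<integral>y. exceed t (m - Suc k) y ((\<Sum>p=1..k. U (w p)) + U y) \<partial>M (w k)) \<partial>markov_path S M x k)"
  proof (subst markov_path_integral[OF x, where c=1])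
    fix w assume "w \<in> space (PiM {..Suc k} (\<lambda>_. S))"
    then show "\<bar>exceed t (m - Suc k) (w (Suc k)) (\<Sum>p = 1..Suc k. U (w p))\<bar> \<le> 1"
      by (intro exceed_abs) (auto simp: space_PiM)
  qed (auto simp: sum_extend_last[where w=w and w'="extend_path k w y" for w y] intro!: integral_cong)
  also have "\<dots> = exceed t m x 0"
    unfolding IH[symmetric] mk by simp
  finally show ?case .
qed

lemma pi_m_exceed:
  assumes x: "x \<in> space S"
  shows "pi_m S M U x m \<delta> = exceed (real m * \<delta>) m x 0"
proof -
  interpret P: prob_space "markov_path S M x m" using markov_path_prob[OF x] by blast
  let ?A = "{w \<in> space (markov_path S M x m). (\<Sum>p=1..m. U (w p)) > real m * \<delta>}"
  have sp: "space (markov_path S M x m) = space (PiM {..m} (\<lambda>_. S))"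
    using markov_path_prob[OF x] by (metis sets_eq_imp_space_eq)
  have "{w \<in> space (PiM {..m} (\<lambda>_. S)). (\<Sum>p=1..m. U (w p)) > real m * \<delta>} \<in> sets (PiM {..m} (\<lambda>_. S))"
    by measurable
  then have A: "?A \<in> sets (markov_path S M x m)" using markov_path_prob[OF x] sp by simp
  have "pi_m S M U x m \<delta> = (\<integral>w. indicator ?A w \<partial>markov_path S M x m)"
    using A by (simp add: pi_m_def)
  also have "\<dots> = (\<integral>w. exceed (real m * \<delta>) (m - m) (w m) (\<Sum>p=1..m. U (w p)) \<partial>markov_path S M x m)"
    by (intro Bochner_Integration.integral_cong) (auto simp: indicator_def)
  also have "\<dots> = exceed (real m * \<delta>) m x 0" by (rule markov_path_exceed[OF x]) simp
  finally show ?thesis .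
qed

section \<open>The selection-mutation map \<open>\<Phi>\<close> and the law of the particle system\<close>

definition config :: "(nat \<Rightarrow> 'a) \<Rightarrow> bool" where
  "config z \<longleftrightarrow> (\<forall>i<N. z i \<in> space S)"

lemma eta_G_pos: "0 < eta N z G"
  using N_pos by (intro eta_pos) auto

lemma eta_q_pos: "config z \<Longrightarrow> y \<in> space S \<Longrightarrow> 0 < eta N z (\<lambda>x. q x y)"
  using N_pos q_pos by (intro eta_pos) (auto simp: config_def)

text \<open>Under (H), \<open>\<Phi>(\<eta>)\<close> has the density \<open>\<eta>(q(., y')) / \<eta>(G)\<close> with respect to \<open>\<nu>\<close>.\<close>
abbreviation Phi_dens :: "(nat \<Rightarrow> 'a) \<Rightarrow> 'a \<Rightarrow> real" where
  "Phi_dens z y' \<equiv> eta N z (\<lambda>x. q x y') / eta N z G"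

lemma Phi_dens_measurable:
  assumes z: "config z" shows "Phi_dens z \<in> borel_measurable \<nu>"
proof -
  have [measurable]: "(\<lambda>y'. q (z i) y') \<in> borel_measurable \<nu>" if "i < N" for i
    using z that by (intro q_measurable_nu) (auto simp: config_def)
  show ?thesis unfolding eta_def by measurable
qed

lemma Phi_dens_emeasure:
  assumes z: "config z" and A: "A \<in> sets S"
  shows "emeasure (density \<nu> (\<lambda>y'. ennreal (Phi_dens z y'))) A
    = ennreal (eta N z (\<lambda>y. G y * measure (M y) A) / eta N z G)"
proof -
  let ?c = "real N * eta N z G"
  have zS: "\<And>i. i < N \<Longrightarrow> z i \<in> space S" using z by (auto simp: config_def)
  have An: "A \<in> sets \<nu>" using A sets_nu by simp
  have c_pos: "0 < ?c" using N_pos eta_G_pos by simp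
  have split: "Phi_dens z y' * indicator A y' = (\<Sum>i<N. q (z i) y' * (indicator A y' / ?c))" for y'
    unfolding eta_def[of N z "\<lambda>x. q x y'"] by (simp add: sum_distrib_left sum_distrib_right sum_divide_distrib field_simps)
  have int: "integrable \<nu> (\<lambda>y'. q (z i) y' * (indicator A y' / ?c))" if "i < N" for i
    by (rule q_integrable[OF zS[OF that], where B="1 / ?c"]) (use An c_pos in \<open>auto simp: indicator_def\<close>)
  have "emeasure (density \<nu> (\<lambda>y'. ennreal (Phi_dens z y'))) A
      = (\<integral>\<^sup>+ y'. ennreal (Phi_dens z y') * indicator A y' \<partial>\<nu>)"
    using An Phi_dens_measurable[OF z] by (subst emeasure_density) auto
  also have "\<dots> = (\<integral>\<^sup>+ y'. ennreal (\<Sum>i<N. q (z i) y' * (indicator A y' / ?c)) \<partial>\<nu>)"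
  proof (rule nn_integral_cong)
    fix y' show "ennreal (Phi_dens z y') * indicator A y' = ennreal (\<Sum>i<N. q (z i) y' * (indicator A y' / ?c))"
      using split[of y'] by (cases "y' \<in> A") (simp_all add: indicator_def)
  qed
  also have "\<dots> = ennreal (\<integral>y'. (\<Sum>i<N. q (z i) y' * (indicator A y' / ?c)) \<partial>\<nu>)"
    using int zS q_pos c_pos
    by (intro nn_integral_eq_integral AE_I2 sum_nonneg mult_nonneg_nonneg)
      (auto simp: space_nu less_imp_le indicator_def)
  also have "(\<integral>y'. (\<Sum>i<N. q (z i) y' * (indicator A y' / ?c)) \<partial>\<nu>)
      = (\<Sum>i<N. (\<integral>y'. q (z i) y' * indicator A y' \<partial>\<nu>) / ?c)"
    using int
    by (subst Bochner_Integration.integral_sum)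
      (auto simp: times_divide_eq_right[symmetric] integral_divide_zero[symmetric]
        simp del: times_divide_eq_right intro!: sum.cong)
  also have "\<dots> = (\<Sum>i<N. G (z i) * measure (M (z i)) A / ?c)"
    using q_density[OF zS A] by (intro sum.cong) (auto simp: set_lebesgue_integral_def mult.commute)
  also have "\<dots> = eta N z (\<lambda>y. G y * measure (M y) A) / eta N z G"
    unfolding eta_def[of N z "\<lambda>y. G y * measure (M y) A"] by (simp add: sum_divide_distrib)
  finally show ?thesis .
qed

lemma sets_Phi[simp]: "sets (Phi S M G N z) = sets S"
  and space_Phi[simp]: "space (Phi S M G N z) = space S"
  unfolding Phi_def by (simp_all add: sets.space_closed)

lemma Phi_density:
  assumes z: "config z"
  shows "Phi S M G N z = density \<nu> (\<lambda>y'. ennreal (Phi_dens z y'))"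
proof -
  let ?D = "density \<nu> (\<lambda>y'. ennreal (Phi_dens z y'))"
  have "Phi S M G N z = measure_of (space S) (sets S) (emeasure ?D)"
    unfolding Phi_def
  proof (rule measure_of_eq[OF sets.space_closed])
    fix A assume "A \<in> sigma_sets (space S) (sets S)"
    then have "A \<in> sets S" by (simp add: sets.sigma_sets_eq)
    then show "ennreal (eta N z (\<lambda>y. G y * measure (M y) A) / eta N z G) = emeasure ?D A"
      using Phi_dens_emeasure[OF z] by simp
  qed
  also have "\<dots> = ?D"
    using measure_of_of_measure[of ?D] sets_nu space_nu by simp
  finally show ?thesis .
qed

text \<open>\<open>\<Phi>(\<eta>)\<close> is a probability, because \<open>M\<close> is Markov.\<close>
lemma Phi_prob:
  assumes z: "config z" shows "prob_space (Phi S M G N z)"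
proof -
  have "\<forall>y\<in>space S. measure (M y) (space S) = 1"
    using M_prob space_M prob_space.prob_space by metis
  then have "eta N z (\<lambda>y. G y * measure (M y) (space S)) = eta N z G"
    unfolding eta_def using z
    by (intro arg_cong[where f="\<lambda>x. x / real N"] sum.cong) (auto simp: config_def)
  then have "emeasure (density \<nu> (\<lambda>y'. ennreal (Phi_dens z y'))) (space S) = 1"
    using Phi_dens_emeasure[OF z sets.top] eta_G_pos[of z] by simp
  then show ?thesis
    unfolding Phi_density[OF z] by (intro prob_spaceI) (simp add: space_nu)
qed

abbreviation Z :: "(nat \<Rightarrow> 'a) measure" where "Z \<equiv> PiM {..<N} (\<lambda>_. S)"
abbreviation W :: "nat \<Rightarrow> (nat \<Rightarrow> nat \<Rightarrow> 'a) measure" where "W k \<equiv> PiM {..k} (\<lambda>_. Z)"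

lemma config_space: "z \<in> space Z \<Longrightarrow> config z"
  by (auto simp: config_def space_PiM)

lemma Phi_kernel:
  assumes f: "f \<in> X \<rightarrow>\<^sub>M Z"
  shows "(\<lambda>x. Phi S M G N (f x)) \<in> X \<rightarrow>\<^sub>M prob_algebra S"
proof (rule measurable_prob_algebra_generated[where \<Omega>="space S" and G="sets S"])
  show "sets S = sigma_sets (space S) (sets S)" by (simp add: sets.sigma_sets_eq)
  show "Int_stable (sets S)" by (auto simp: Int_stable_def)
  show "sets S \<subseteq> Pow (space S)" by (rule sets.space_closed)
  fix a assume "a \<in> space X"
  then show "prob_space (Phi S M G N (f a))" "sets (Phi S M G N (f a)) = sets S"
    using measurable_space[OF f] config_space Phi_prob by auto
next
  fix A assume A: "A \<in> sets S"
  have [measurable]: "(\<lambda>x. f x i) \<in> X \<rightarrow>\<^sub>M S" if "i < N" for i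
    using measurable_compose[OF f measurable_component_singleton[of i "{..<N}" "\<lambda>_. S"]] that by simp
  have [measurable]: "(\<lambda>y. measure (M y) A) \<in> borel_measurable S"
    using measurable_compose[OF measurable_prob_algebraD[OF M_kernel] measurable_measure_subprob_algebra] A
    by simp
  have "(\<lambda>x. ennreal (eta N (f x) (\<lambda>y. G y * measure (M y) A) / eta N (f x) G)) \<in> borel_measurable X"
    unfolding eta_def by measurable
  then show "(\<lambda>x. emeasure (Phi S M G N (f x)) A) \<in> borel_measurable X"
    by (rule measurable_cong[THEN iffD1, rotated])
      (use A measurable_space[OF f] config_space Phi_density Phi_dens_emeasure in auto)
qed

lemma Phi_sample_kernel:
  assumes f: "f \<in> X \<rightarrow>\<^sub>M Z"
  shows "(\<lambda>x. PiM {..<N} (\<lambda>_. Phi S M G N (f x))) \<in> X \<rightarrow>\<^sub>M prob_algebra Z"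
proof (rule measurable_prob_algebra_generated[where \<Omega>="PiE {..<N} (\<lambda>_. space S)" and G="prod_algebra {..<N} (\<lambda>_. S)"])
  show "sets Z = sigma_sets (PiE {..<N} (\<lambda>_. space S)) (prod_algebra {..<N} (\<lambda>_. S))" by (rule sets_PiM)
  show "Int_stable (prod_algebra {..<N} (\<lambda>_. S))" by (rule Int_stable_prod_algebra)
  show "prod_algebra {..<N} (\<lambda>_. S) \<subseteq> Pow (PiE {..<N} (\<lambda>_. space S))"
    using prod_algebra_sets_into_space[of "{..<N}" "\<lambda>_. S"] by simp
  fix a assume "a \<in> space X"
  then have a: "config (f a)" using measurable_space[OF f] config_space by blast
  show "prob_space (PiM {..<N} (\<lambda>_. Phi S M G N (f a)))"
    by (rule prob_space_PiM) (rule Phi_prob[OF a])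
  show "sets (PiM {..<N} (\<lambda>_. Phi S M G N (f a))) = sets Z"
    by (rule sets_PiM_cong) auto
next
  fix A assume "A \<in> prod_algebra {..<N} (\<lambda>_. S)"
  then obtain E where E: "A = PiE {..<N} E" "E \<in> (\<Pi> i\<in>{..<N}. sets S)"
    by (auto elim: prod_algebraE_all)
  have K: "(\<lambda>x. Phi S M G N (f x)) \<in> X \<rightarrow>\<^sub>M subprob_algebra S"
    using measurable_prob_algebraD[OF Phi_kernel[OF f]] .
  have "(\<lambda>x. \<Prod>i<N. emeasure (Phi S M G N (f x)) (E i)) \<in> borel_measurable X"
    using E(2) by (intro borel_measurable_prod_ennreal measurable_emeasure_kernel[OF K]) auto
  then show "(\<lambda>x. emeasure (PiM {..<N} (\<lambda>_. Phi S M G N (f x))) A) \<in> borel_measurable X"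
  proof (rule measurable_cong[THEN iffD1, rotated])
    fix x assume "x \<in> space X"
    then have x: "config (f x)" using measurable_space[OF f] config_space by blast
    interpret product_sigma_finite "\<lambda>_. Phi S M G N (f x)"
      unfolding product_sigma_finite_def using prob_space_imp_sigma_finite[OF Phi_prob[OF x]] by simp
    show "(\<Prod>i<N. emeasure (Phi S M G N (f x)) (E i)) = emeasure (PiM {..<N} (\<lambda>_. Phi S M G N (f x))) A"
      unfolding E(1) using E(2) by (subst emeasure_PiM) auto
  qed
qed

lemma Phi_last_kernel: "(\<lambda>w. PiM {..<N} (\<lambda>_. Phi S M G N (w k))) \<in> W k \<rightarrow>\<^sub>M prob_algebra Z"
  by (rule Phi_sample_kernel) (rule measurable_component_singleton, simp)

lemma particle_law_prob:
  assumes mu: "prob_space \<mu>" "sets \<mu> = sets S"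
  shows "sets (particle_law S \<mu> M G N k) = sets (W k) \<and> prob_space (particle_law S \<mu> M G N k)"
proof (induction k)
  case 0
  have m: "(\<lambda>z. \<lambda>k\<in>{..0::nat}. z) \<in> PiM {..<N} (\<lambda>_. \<mu>) \<rightarrow>\<^sub>M W 0"
  proof (rule measurable_restrict)
    show "(\<lambda>z. z) \<in> PiM {..<N} (\<lambda>_. \<mu>) \<rightarrow>\<^sub>M Z" for i :: nat
      by (rule measurable_ident_sets) (rule sets_PiM_cong, use mu in auto)
  qed
  have "prob_space (PiM {..<N} (\<lambda>_. \<mu>))" by (rule prob_space_PiM) (use mu in auto)
  then show ?case using m by (auto intro!: prob_space.prob_space_distr)
next
  case (Suc k)
  then show ?case using bind_extend_path(1,2)[OF _ _ Phi_last_kernel] by simp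
qed

lemma space_particle_law:
  "prob_space \<mu> \<Longrightarrow> sets \<mu> = sets S \<Longrightarrow> space (particle_law S \<mu> M G N k) = space (W k)"
  using particle_law_prob[of \<mu> k] by (metis sets_eq_imp_space_eq)

lemma particle_law_integral:
  fixes f :: "(nat \<Rightarrow> nat \<Rightarrow> 'a) \<Rightarrow> real"
  assumes mu: "prob_space \<mu>" "sets \<mu> = sets S"
    and "f \<in> borel_measurable (W (Suc k))" and "\<And>w. w \<in> space (W (Suc k)) \<Longrightarrow> \<bar>f w\<bar> \<le> c"
  shows "(\<integral>w. f w \<partial>particle_law S \<mu> M G N (Suc k)) =
    (\<integral>w. (\<integral>z. f (extend_path k w z) \<partial>PiM {..<N} (\<lambda>_. Phi S M G N (w k))) \<partial>particle_law S \<mu> M G N k)"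
proof -
  have P: "prob_space (particle_law S \<mu> M G N k)" "sets (particle_law S \<mu> M G N k) = sets (W k)"
    using particle_law_prob[OF mu] by auto
  show ?thesis using bind_extend_path(3)[OF P Phi_last_kernel assms(3,4)] by simp
qed

section \<open>Particle kernels\<close>

lemma dens_pos: "config (w a) \<Longrightarrow> y \<in> space S \<Longrightarrow> y' \<in> space S \<Longrightarrow> 0 < dens N G q w (Suc a) y y'"
  unfolding dens_def using q_pos eta_q_pos eta_G_pos by (auto intro!: divide_pos_pos mult_pos_pos)

text \<open>A uniform bound on \<open>dens / G\<close>, needed only to make all integrands bounded.\<close>
definition dens_bound :: real where
  "dens_bound = q_hi * exp \<bar>\<alpha>\<bar> / q_lo / exp (- \<bar>\<alpha>\<bar>)"

lemma dens_bound:
  assumes "config (w a)" "y \<in> space S" "y' \<in> space S"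
  shows "dens N G q w (Suc a) y y' / G y \<le> dens_bound"
proof -
  have wa: "\<And>i. i < N \<Longrightarrow> w a i \<in> space S" using assms(1) by (auto simp: config_def)
  have "eta N (w a) G \<le> exp \<bar>\<alpha>\<bar>" using N_pos wa G_bounds by (intro eta_le) auto
  then have "q y y' * eta N (w a) G \<le> q_hi * exp \<bar>\<alpha>\<bar>"
    using q_bounds[OF assms(2,3)] q_pos[OF assms(2,3)] eta_G_pos[of "w a"] by (intro mult_mono) auto
  moreover have "q_lo \<le> eta N (w a) (\<lambda>x. q x y')" using N_pos wa q_bounds assms(3) by (intro eta_ge) auto
  ultimately have "dens N G q w (Suc a) y y' \<le> q_hi * exp \<bar>\<alpha>\<bar> / q_lo"
    unfolding dens_def using q_lo_pos q_hi_pos by (intro frac_le) auto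
  then show ?thesis
    unfolding dens_bound_def using G_bounds[OF assms(2)] q_lo_pos q_hi_pos by (intro frac_le) auto
qed

text \<open>The particle analogue of \<open>M\<close> acting on functions of the state and of the running sum:
  \<open>particle_step w k g y s = \<eta>\<^sub>k(dens\<^sub>k(y, .) g(., s + U .)) / G(y)\<close>, i.e.\ \<open>Q\<^sub>k\<^sup>N\<close> divided by \<open>G\<close>.\<close>
definition particle_step :: "(nat \<Rightarrow> nat \<Rightarrow> 'a) \<Rightarrow> nat \<Rightarrow> ('a \<Rightarrow> real \<Rightarrow> real) \<Rightarrow> 'a \<Rightarrow> real \<Rightarrow> real" where
  "particle_step w k g y s =
     (\<Sum>j<N. dens N G q w k y (w k j) / (real N * G y) * g (w k j) (s + U (w k j)))"

text \<open>\<open>particle_iter w a p\<close> composes the particle steps of generations \<open>a + 1, \<dots>, a + p\<close>.\<close>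
primrec particle_iter ::
  "(nat \<Rightarrow> nat \<Rightarrow> 'a) \<Rightarrow> nat \<Rightarrow> nat \<Rightarrow> 'a \<Rightarrow> real \<Rightarrow> ('a \<Rightarrow> real \<Rightarrow> real) \<Rightarrow> real" where
  "particle_iter w a 0 y s g = g y s"
| "particle_iter w a (Suc p) y s g = particle_step w (Suc a) (\<lambda>y' s'. particle_iter w (Suc a) p y' s' g) y s"

lemma particle_iter_snoc:
  "particle_iter w a (Suc p) y s g = particle_iter w a p y s (particle_step w (Suc (a + p)) g)"
proof (induction p arbitrary: a y s)
  case (Suc p)
  then have "(\<lambda>y' s'. particle_iter w (Suc a) (Suc p) y' s' g)
      = (\<lambda>y' s'. particle_iter w (Suc a) p y' s' (particle_step w (Suc (Suc a + p)) g))"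
    by (intro ext) blast
  then show ?case by simp
qed simp

lemma particle_iter_local:
  "(\<And>i. i \<le> a + p \<Longrightarrow> w' i = w i) \<Longrightarrow> particle_iter w' a p y s g = particle_iter w a p y s g"
proof (induction p arbitrary: a y s)
  case (Suc p)
  then have "particle_iter w' (Suc a) p y' s' g = particle_iter w (Suc a) p y' s' g" for y' s'
    by (intro Suc.IH) auto
  moreover have "w' (Suc a) = w (Suc a)" "w' a = w a" using Suc.prems by auto
  ultimately show ?case by (simp add: particle_step_def dens_def)
qed simp

definition configs :: "(nat \<Rightarrow> nat \<Rightarrow> 'a) \<Rightarrow> nat \<Rightarrow> nat \<Rightarrow> bool" where
  "configs w a p \<longleftrightarrow> (\<forall>i. a \<le> i \<and> i \<le> a + p \<longrightarrow> config (w i))"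

lemma configs_Suc: "configs w a (Suc p) \<Longrightarrow> configs w (Suc a) p"
  unfolding configs_def by auto

lemma configs_next: "configs w a (Suc p) \<Longrightarrow> j < N \<Longrightarrow> w (Suc a) j \<in> space S"
  unfolding configs_def config_def by auto

lemma configs_W: "w \<in> space (W K) \<Longrightarrow> a + p \<le> K \<Longrightarrow> configs w a p"
  unfolding configs_def config_def by (auto simp: space_PiM PiE_iff)

lemma particle_iter_cong:
  assumes "configs w a p" "y \<in> space S" "\<And>y' s'. y' \<in> space S \<Longrightarrow> g y' s' = g' y' s'"
  shows "particle_iter w a p y s g = particle_iter w a p y s g'"
  using assms
proof (induction p arbitrary: a y s)
  case (Suc p)
  then have "particle_iter w (Suc a) p (w (Suc a) j) s' g = particle_iter w (Suc a) p (w (Suc a) j) s' g'"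
    if "j < N" for j s'
    using configs_next[OF Suc.prems(1) that] by (intro Suc.IH configs_Suc) auto
  then show ?case by (simp add: particle_step_def)
qed simp

lemma particle_iter_bound:
  assumes "configs w a p" "y \<in> space S" "\<And>y' s'. y' \<in> space S \<Longrightarrow> \<bar>g y' s'\<bar> \<le> B"
  shows "\<bar>particle_iter w a p y s g\<bar> \<le> dens_bound ^ p * B"
  using assms
proof (induction p arbitrary: a y s)
  case (Suc p)
  have wa: "config (w a)" using Suc.prems(1) by (auto simp: configs_def)
  let ?d = "\<lambda>j. dens N G q w (Suc a) y (w (Suc a) j)"
  have IH: "\<bar>particle_iter w (Suc a) p (w (Suc a) j) s' g\<bar> \<le> dens_bound ^ p * B" if "j < N" for j s'
    using Suc.prems configs_next[OF Suc.prems(1) that] by (intro Suc.IH configs_Suc) auto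
  have coef: "0 \<le> ?d j / (real N * G y) \<and> ?d j / (real N * G y) \<le> dens_bound / real N" if "j < N" for j
  proof -
    have d: "0 < ?d j" and b: "?d j / G y \<le> dens_bound"
      using dens_pos dens_bound wa Suc.prems(2) configs_next[OF Suc.prems(1) that] by auto
    have "?d j / (real N * G y) = ?d j / G y / real N" by (simp add: mult.commute)
    also have "\<dots> \<le> dens_bound / real N" by (rule divide_right_mono) (use b in auto)
    finally show ?thesis using d by auto

  qed
  let ?R = "\<lambda>j. particle_iter w (Suc a) p (w (Suc a) j) (s + U (w (Suc a) j)) g"
  have "\<bar>particle_iter w a (Suc p) y s g\<bar> \<le> (\<Sum>j<N. \<bar>?d j / (real N * G y)\<bar> * \<bar>?R j\<bar>)"
    unfolding particle_iter.simps particle_step_def abs_mult[symmetric] by (rule sum_abs)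
  also have "\<dots> \<le> (\<Sum>j<N. dens_bound / real N * (dens_bound ^ p * B))"
  proof (rule sum_mono)
    fix j assume "j \<in> {..<N}"
    then have j: "j < N" by simp
    have "\<bar>?d j / (real N * G y)\<bar> \<le> dens_bound / real N" "0 \<le> dens_bound / real N"
      using coef[OF j] by linarith+
    then show "\<bar>?d j / (real N * G y)\<bar> * \<bar>?R j\<bar> \<le> dens_bound / real N * (dens_bound ^ p * B)"
      using IH[OF j] by (intro mult_mono) auto
  qed
  also have "\<dots> = dens_bound ^ Suc p * B" using N_pos by simp
  finally show ?case .
qed simp

lemma particle_measurable:
  "i \<le> K \<Longrightarrow> j < N \<Longrightarrow> (\<lambda>w. w i j) \<in> W K \<rightarrow>\<^sub>M S"
  using measurable_compose[OF measurable_component_singleton[of i "{..K}" "\<lambda>_. Z"]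
      measurable_component_singleton[of j "{..<N}" "\<lambda>_. S"]] by simp

lemma particle_iter_measurable:
  assumes "a + p \<le> K" "Y \<in> W K \<rightarrow>\<^sub>M S" "Sf \<in> borel_measurable (W K)"
    and g[measurable]: "(\<lambda>(y, s). g y s) \<in> borel_measurable (S \<Otimes>\<^sub>M borel)"
  shows "(\<lambda>w. particle_iter w a p (Y w) (Sf w) g) \<in> borel_measurable (W K)"
  using assms(1-3)
proof (induction p arbitrary: a Y Sf)
  case 0
  then show ?case using measurable_compose[OF measurable_Pair g, of Y "W K" Sf] by simp
next
  case (Suc p)
  note [measurable] = Suc.prems(2,3)
  have [measurable]: "(\<lambda>w. w a i) \<in> W K \<rightarrow>\<^sub>M S" "(\<lambda>w. w (Suc a) i) \<in> W K \<rightarrow>\<^sub>M S" if "i < N" for i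
    using particle_measurable Suc.prems(1) that by auto
  have [measurable]: "(\<lambda>w. particle_iter w (Suc a) p (w (Suc a) j) (Sf w + U (w (Suc a) j)) g)
      \<in> borel_measurable (W K)" if "j < N" for j
    using Suc.prems(1) that by (intro Suc.IH) auto
  have [measurable]: "(\<lambda>w. dens N G q w (Suc a) (Y w) (w (Suc a) j)) \<in> borel_measurable (W K)"
    if "j < N" for j
  proof -
    have "(\<lambda>w. q (Y w) (w (Suc a) j) * ((\<Sum>i<N. G (w a i)) / real N)
        / ((\<Sum>i<N. q (w a i) (w (Suc a) j)) / real N)) \<in> borel_measurable (W K)"
      using that by measurable
    then show ?thesis by (simp add: dens_def eta_def)
  qed
  show ?case
    unfolding particle_iter.simps particle_step_def by measurable
qed

lemma particle_iter_integral:
  fixes gz :: "'b \<Rightarrow> 'a \<Rightarrow> real \<Rightarrow> real"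
  assumes "configs w a p" "y \<in> space S" "\<And>y' s'. y' \<in> space S \<Longrightarrow> integrable \<mu> (\<lambda>z. gz z y' s')"
  shows "integrable \<mu> (\<lambda>z. particle_iter w a p y s (gz z)) \<and>
    (\<integral>z. particle_iter w a p y s (gz z) \<partial>\<mu>) = particle_iter w a p y s (\<lambda>y' s'. \<integral>z. gz z y' s' \<partial>\<mu>)"
  using assms(1,2)
proof (induction p arbitrary: a y s)
  case 0
  then show ?case using assms(3) by simp
next
  case (Suc p)
  have IH: "integrable \<mu> (\<lambda>z. particle_iter w (Suc a) p (w (Suc a) j) s' (gz z)) \<and>
    (\<integral>z. particle_iter w (Suc a) p (w (Suc a) j) s' (gz z) \<partial>\<mu>)
      = particle_iter w (Suc a) p (w (Suc a) j) s' (\<lambda>y' s'. \<integral>z. gz z y' s' \<partial>\<mu>)"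
    if "j < N" for j s'
    using Suc.prems configs_next[OF Suc.prems(1) that] by (intro Suc.IH configs_Suc) auto
  have int: "integrable \<mu> (\<lambda>z. dens N G q w (Suc a) y (w (Suc a) j) / (real N * G y) *
      particle_iter w (Suc a) p (w (Suc a) j) (s + U (w (Suc a) j)) (gz z))" if "j < N" for j
    using IH[OF that] by auto
  then have "integrable \<mu> (\<lambda>z. particle_iter w a (Suc p) y s (gz z))"
    unfolding particle_iter.simps particle_step_def by auto
  moreover have "(\<integral>z. particle_iter w a (Suc p) y s (gz z) \<partial>\<mu>)
      = particle_iter w a (Suc p) y s (\<lambda>y' s'. \<integral>z. gz z y' s' \<partial>\<mu>)"
    unfolding particle_iter.simps particle_step_def
    using int IH by (subst Bochner_Integration.integral_sum) (auto intro!: sum.cong)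
  ultimately show ?case by blast
qed

section \<open>Unbiasedness of the particle kernels\<close>

text \<open>The key cancellation: under \<open>\<Phi>(\<eta>\<^sub>k)\<close>, the density \<open>dens\<^sub>k\<^sub>+\<^sub>1(y, .)\<close> turns into \<open>q(y, .)\<close>,
  so a single new particle reproduces \<open>M(y, .)\<close> (up to the factor \<open>1/N\<close>).\<close>
lemma particle_weight_integral:
  assumes wk: "config (w k)" and y: "y \<in> space S"
    and h[measurable]: "h \<in> borel_measurable S" and hb: "\<And>z. z \<in> space S \<Longrightarrow> \<bar>h z\<bar> \<le> B"
  shows "integrable (Phi S M G N (w k)) (\<lambda>z'. dens N G q w (Suc k) y z' / (real N * G y) * h z')"
    and "(\<integral>z'. dens N G q w (Suc k) y z' / (real N * G y) * h z' \<partial>Phi S M G N (w k))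
      = (\<integral>z. h z \<partial>M y) / real N"
proof -
  define c where "c = (\<lambda>z'. dens N G q w (Suc k) y z' / (real N * G y) * h z')"
  have wki: "\<And>i. i < N \<Longrightarrow> w k i \<in> space S" using wk by (auto simp: config_def)
  have [measurable]: "(\<lambda>z'. q (w k i) z') \<in> borel_measurable S" if "i < N" for i
    using wki[OF that] by (intro q_measurable) auto
  have [measurable]: "(\<lambda>z'. q y z') \<in> borel_measurable S" using y by (intro q_measurable) auto
  have "(\<lambda>z'. q y z' * ((\<Sum>i<N. G (w k i)) / real N) / ((\<Sum>i<N. q (w k i) z') / real N)
      / (real N * G y) * h z') \<in> borel_measurable \<nu>"
    using sets_nu by (simp cong: measurable_cong_sets) measurable
  then have cm: "c \<in> borel_measurable \<nu>" by (simp add: c_def dens_def eta_def)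
  have cancel: "Phi_dens (w k) z' *\<^sub>R c z' = q y z' * (h z' / (real N * G y))" if "z' \<in> space \<nu>" for z'
    using eta_q_pos[OF wk, of z'] eta_G_pos[of "w k"] that
    unfolding c_def dens_def by (simp add: space_nu field_simps)
  have dens_nn: "AE z' in \<nu>. 0 \<le> Phi_dens (w k) z'"
    using eta_q_pos[OF wk] eta_G_pos by (intro AE_I2) (auto simp: space_nu less_imp_le)
  have int_nu: "integrable \<nu> (\<lambda>z'. q y z' * (h z' / (real N * G y)))"
    by (rule q_integrable[OF y, where B="B / real N / G y"])
      (use sets_nu hb N_pos in \<open>auto simp: abs_div cong: measurable_cong_sets intro!: divide_right_mono\<close>)
  show "integrable (Phi S M G N (w k)) (\<lambda>z'. dens N G q w (Suc k) y z' / (real N * G y) * h z')"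
    unfolding Phi_density[OF wk] c_def[symmetric]
  proof (subst integrable_density[OF cm Phi_dens_measurable[OF wk] dens_nn])
    show "integrable \<nu> (\<lambda>z'. Phi_dens (w k) z' *\<^sub>R c z')"
      by (rule Bochner_Integration.integrable_cong[THEN iffD2, OF refl _ int_nu]) (use cancel in auto)
  qed
  have "(\<integral>z. c z \<partial>Phi S M G N (w k)) = (\<integral>z. Phi_dens (w k) z *\<^sub>R c z \<partial>\<nu>)"
    unfolding Phi_density[OF wk] by (rule integral_density[OF cm Phi_dens_measurable[OF wk]]) (use dens_nn in auto)
  also have "\<dots> = (\<integral>z. q y z * (h z / (real N * G y)) \<partial>\<nu>)"
    by (rule Bochner_Integration.integral_cong) (use cancel in auto)
  also have "\<dots> = (\<integral>z. q y z * h z \<partial>\<nu>) / (real N * G y)"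
    by (simp add: integral_divide_zero[symmetric] mult.assoc times_divide_eq_right[symmetric]
        del: times_divide_eq_right)
  also have "\<dots> = (\<integral>z. h z \<partial>M y) / real N"
    using integral_M[OF y h] by simp
  finally show "(\<integral>z'. dens N G q w (Suc k) y z' / (real N * G y) * h z' \<partial>Phi S M G N (w k))
      = (\<integral>z. h z \<partial>M y) / real N" unfolding c_def .
qed

lemma particle_step_unbiased:
  assumes wk: "config (w k)" and y: "y \<in> space S"
    and h: "h \<in> borel_measurable S" and hb: "\<And>z. z \<in> space S \<Longrightarrow> \<bar>h z\<bar> \<le> B"
  shows "integrable (PiM {..<N} (\<lambda>_. Phi S M G N (w k)))
      (\<lambda>z. \<Sum>j<N. dens N G q w (Suc k) y (z j) / (real N * G y) * h (z j))"
    and "(\<integral>z. (\<Sum>j<N. dens N G q w (Suc k) y (z j) / (real N * G y) * h (z j))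
        \<partial>PiM {..<N} (\<lambda>_. Phi S M G N (w k))) = (\<integral>z. h z \<partial>M y)"
proof -
  note one = particle_weight_integral[of w k, OF wk y h hb]
  note sum = integral_PiM_sum_components[where N=N, OF Phi_prob[OF wk] one(1)]
  show "integrable (PiM {..<N} (\<lambda>_. Phi S M G N (w k)))
      (\<lambda>z. \<Sum>j<N. dens N G q w (Suc k) y (z j) / (real N * G y) * h (z j))"
    by (rule sum(1))
  have "(\<integral>z. (\<Sum>j<N. dens N G q w (Suc k) y (z j) / (real N * G y) * h (z j))
      \<partial>PiM {..<N} (\<lambda>_. Phi S M G N (w k)))
      = real N * (\<integral>z'. dens N G q w (Suc k) y z' / (real N * G y) * h z' \<partial>Phi S M G N (w k))"
    by (rule sum(2))
  also have "\<dots> = real N * ((\<integral>z. h z \<partial>M y) / real N)"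
    by (simp only: one(2))
  also have "\<dots> = (\<integral>z. h z \<partial>M y)" using N_pos by simp
  finally show "(\<integral>z. (\<Sum>j<N. dens N G q w (Suc k) y (z j) / (real N * G y) * h (z j))
      \<partial>PiM {..<N} (\<lambda>_. Phi S M G N (w k))) = (\<integral>z. h z \<partial>M y)" .
qed

lemma integrate_last_generation:
  assumes w: "configs w a p" and y: "y \<in> space S"
    and g[measurable]: "(\<lambda>(y, s). g y s) \<in> borel_measurable (S \<Otimes>\<^sub>M borel)"
    and gb: "\<And>y s. y \<in> space S \<Longrightarrow> \<bar>g y s\<bar> \<le> 1"
  shows "(\<integral>z. particle_iter (extend_path (a + p) w z) a (Suc p) y s g \<partial>PiM {..<N} (\<lambda>_. Phi S M G N (w (a + p))))
    = particle_iter w a p y s (\<lambda>y' s'. \<integral>z. g z (s' + U z) \<partial>M y')"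
proof -
  let ?P = "PiM {..<N} (\<lambda>_. Phi S M G N (w (a + p)))"
  define gz where "gz = (\<lambda>z y s. \<Sum>j<N. dens N G q w (Suc (a + p)) y (z j) / (real N * G y) * g (z j) (s + U (z j)))"
  have wk: "config (w (a + p))" using w by (auto simp: configs_def)
  have unbiased: "integrable ?P (\<lambda>z. gz z y' s') \<and> (\<integral>z. gz z y' s' \<partial>?P) = (\<integral>z. g z (s' + U z) \<partial>M y')"
    if "y' \<in> space S" for y' s'
    using particle_step_unbiased[of w "a + p", OF wk that, where B=1 and h="\<lambda>z. g z (s' + U z)"] gb
    unfolding gz_def by auto
  have "particle_iter (extend_path (a + p) w z) a (Suc p) y s g
      = particle_iter (extend_path (a + p) w z) a p y s (gz z)" for z
    unfolding particle_iter_snoc gz_def particle_step_def dens_def by simp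
  also have "\<dots> z = particle_iter w a p y s (gz z)" for z
    by (rule particle_iter_local) auto
  finally have "(\<integral>z. particle_iter (extend_path (a + p) w z) a (Suc p) y s g \<partial>?P)
      = (\<integral>z. particle_iter w a p y s (gz z) \<partial>?P)" by simp
  also have "\<dots> = particle_iter w a p y s (\<lambda>y' s'. \<integral>z. gz z y' s' \<partial>?P)"
    using particle_iter_integral[OF w y, of ?P gz] unbiased by blast
  also have "\<dots> = particle_iter w a p y s (\<lambda>y' s'. \<integral>z. g z (s' + U z) \<partial>M y')"
    using unbiased by (intro particle_iter_cong[OF w y]) auto
  finally show ?thesis .
qed

lemma particle_iter_bounded_measurable:
  assumes "a + p \<le> K" "x \<in> space S"
    and "(\<lambda>(y, s). g y s) \<in> borel_measurable (S \<Otimes>\<^sub>M borel)" "\<And>y s. y \<in> space S \<Longrightarrow> \<bar>g y s\<bar> \<le> 1"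
  shows "(\<lambda>w. particle_iter w a p x 0 g) \<in> borel_measurable (W K)"
    and "w \<in> space (W K) \<Longrightarrow> \<bar>particle_iter w a p x 0 g\<bar> \<le> dens_bound ^ p * 1"
  using particle_iter_measurable[OF assms(1) _ _ assms(3), of "\<lambda>_. x" "\<lambda>_. 0"] assms(2)
    particle_iter_bound[OF configs_W assms(2) assms(4)] assms(1) by auto

lemma particle_iter_expectation:
  assumes mu: "prob_space \<mu>" "sets \<mu> = sets S" and x: "x \<in> space S"
  shows "p \<le> m \<Longrightarrow>
    (\<integral>w. particle_iter w n p x 0 (exceed t (m - p)) \<partial>particle_law S \<mu> M G N (n + p)) = exceed t m x 0"
proof (induction p)
  case 0
  interpret prob_space "particle_law S \<mu> M G N n" using particle_law_prob[OF mu] by blast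
  show ?case by (simp add: prob_space)
next
  case (Suc p)
  then have IH: "(\<integral>w. particle_iter w n p x 0 (exceed t (m - p)) \<partial>particle_law S \<mu> M G N (n + p))
      = exceed t m x 0" and mp: "m - p = Suc (m - Suc p)" by auto
  let ?g = "exceed t (m - Suc p)"
  have "(\<integral>w. particle_iter w n (Suc p) x 0 ?g \<partial>particle_law S \<mu> M G N (Suc (n + p)))
      = (\<integral>w. (\<integral>z. particle_iter (extend_path (n + p) w z) n (Suc p) x 0 ?g
          \<partial>PiM {..<N} (\<lambda>_. Phi S M G N (w (n + p)))) \<partial>particle_law S \<mu> M G N (n + p))"
    using particle_iter_bounded_measurable[of n "Suc p" "Suc (n + p)" x ?g] x exceed_abs
    by (intro particle_law_integral[OF mu]) (auto simp: case_prod_beta')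
  also have "\<dots> = (\<integral>w. particle_iter w n p x 0 (exceed t (m - p)) \<partial>particle_law S \<mu> M G N (n + p))"
  proof (rule Bochner_Integration.integral_cong[OF refl])
    fix w assume "w \<in> space (particle_law S \<mu> M G N (n + p))"
    then have w: "configs w n p" using configs_W space_particle_law[OF mu] by simp
    show "(\<integral>z. particle_iter (extend_path (n + p) w z) n (Suc p) x 0 ?g
        \<partial>PiM {..<N} (\<lambda>_. Phi S M G N (w (n + p)))) = particle_iter w n p x 0 (exceed t (m - p))"
    proof -
      have "exceed t (m - p) = (\<lambda>y' s'. \<integral>z. ?g z (s' + U z) \<partial>M y')"
        by (simp add: mp fun_eq_iff)
      then show ?thesis
        using integrate_last_generation[OF w x conjunct1[OF exceed_measurable_bounded] exceed_abs] by simp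
    qed
  qed
  finally show ?case using IH by simp
qed

text \<open>Generations after \<open>n + m\<close> do not enter \<open>particle_iter w n m\<close>, so they integrate out.\<close>
lemma particle_law_later_generations:
  assumes mu: "prob_space \<mu>" "sets \<mu> = sets S" and x: "x \<in> space S"
    and g: "(\<lambda>(y, s). g y s) \<in> borel_measurable (S \<Otimes>\<^sub>M borel)" and gb: "\<And>y s. y \<in> space S \<Longrightarrow> \<bar>g y s\<bar> \<le> 1"
  shows "(\<integral>w. particle_iter w n m x 0 g \<partial>particle_law S \<mu> M G N (n + m + d))
    = (\<integral>w. particle_iter w n m x 0 g \<partial>particle_law S \<mu> M G N (n + m))"
proof (induction d)
  case (Suc d)
  let ?k = "n + m + d"
  have "(\<integral>w. particle_iter w n m x 0 g \<partial>particle_law S \<mu> M G N (Suc ?k))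
      = (\<integral>w. (\<integral>z. particle_iter (extend_path ?k w z) n m x 0 g
          \<partial>PiM {..<N} (\<lambda>_. Phi S M G N (w ?k))) \<partial>particle_law S \<mu> M G N ?k)"
    using particle_iter_bounded_measurable[of n m "Suc ?k" x g] x g gb
    by (intro particle_law_integral[OF mu]) auto
  also have "\<dots> = (\<integral>w. particle_iter w n m x 0 g \<partial>particle_law S \<mu> M G N ?k)"
  proof (rule Bochner_Integration.integral_cong[OF refl])
    fix w assume "w \<in> space (particle_law S \<mu> M G N ?k)"
    then have "config (w ?k)" using configs_W[of w ?k ?k 0] space_particle_law[OF mu] by (simp add: configs_def)
    then interpret prob_space "PiM {..<N} (\<lambda>_. Phi S M G N (w ?k))"
      by (intro prob_space_PiM Phi_prob)
    have "particle_iter (extend_path ?k w z) n m x 0 g = particle_iter w n m x 0 g" for z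
      by (rule particle_iter_local) auto
    then show "(\<integral>z. particle_iter (extend_path ?k w z) n m x 0 g \<partial>PiM {..<N} (\<lambda>_. Phi S M G N (w ?k)))
        = particle_iter w n m x 0 g" by (simp add: prob_space)
  qed
  finally show ?case using Suc by simp
qed simp

lemma particle_law_exceed:
  assumes mu: "prob_space \<mu>" "sets \<mu> = sets S" and x: "x \<in> space S" and mn: "m \<le> n"
  shows "(\<integral>w. particle_iter w n m x 0 (exceed t 0) \<partial>particle_law S \<mu> M G N (2 * n)) = exceed t m x 0"
proof -
  have "(\<integral>w. particle_iter w n m x 0 (exceed t 0) \<partial>particle_law S \<mu> M G N (2 * n))
      = (\<integral>w. particle_iter w n m x 0 (exceed t 0) \<partial>particle_law S \<mu> M G N (n + m + (n - m)))"
    using mn by (simp add: mult_2)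
  also have "\<dots> = (\<integral>w. particle_iter w n m x 0 (exceed t 0) \<partial>particle_law S \<mu> M G N (n + m))"
    using exceed_measurable_bounded exceed_abs by (intro particle_law_later_generations[OF mu x]) auto
  also have "\<dots> = exceed t m x 0"
    using particle_iter_expectation[OF mu x, of m m n t] by simp
  finally show ?thesis .
qed

section \<open>The backward chain\<close>

lemma Qpk_step:
  assumes "1 \<le> p" "p \<le> K"
  shows "Qpk N G q w (p - 1) K f = Qop N G q w p (Qpk N G q w p K f)"
proof -
  have "K - (p - 1) = Suc (K - p)" "K - (K - p) = p" using assms by auto
  then show ?thesis unfolding Qpk_def by simp
qed

lemma hpk_eq:
  "p \<le> K \<Longrightarrow> hpk N G q w p K = (\<lambda>y. Qpk N G q w p K (\<lambda>_. 1) y / eta N (w p) (Qpk N G q w p K (\<lambda>_. 1)))"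
  using N_pos by (intro ext) (auto simp: hpk_def Qpk_def)

lemma Qop_div: "Qop N G q w k (\<lambda>x. f x / c) y = Qop N G q w k f y / c"
  unfolding Qop_def by (simp add: eta_div[symmetric] times_divide_eq_right)

lemma Qop_pos:
  assumes "1 \<le> k" "k \<le> K" "configs w 0 K" "y \<in> space S" "\<And>j. j < N \<Longrightarrow> 0 < f (w k j)"
  shows "0 < Qop N G q w k f y"
proof -
  have k: "k = Suc (k - 1)" using assms by simp
  have "config (w (k - 1))" "\<And>j. j < N \<Longrightarrow> w k j \<in> space S"
    using assms(1-3) by (auto simp: configs_def config_def)
  then have "0 < dens N G q w k y (w k j)" if "j < N" for j
    using dens_pos[of w "k - 1", OF _ assms(4)] k that by simp
  then show ?thesis unfolding Qop_def using N_pos assms(5) by (intro eta_pos) auto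
qed

lemma Qpk_pos:
  assumes "p \<le> K" "configs w 0 K" "y \<in> space S"
  shows "0 < Qpk N G q w p K (\<lambda>_. 1) y"
proof -
  have "d \<le> K \<Longrightarrow> y \<in> space S \<Longrightarrow> 0 < Qcomp N G q w K d (\<lambda>_. 1) y" for d y
  proof (induction d arbitrary: y)
    case (Suc d)
    have "0 < Qop N G q w (K - d) (Qcomp N G q w K d (\<lambda>_. 1)) y"
      using Suc assms(2) by (intro Qop_pos[of _ K]) (auto simp: configs_def config_def)
    then show ?case by simp
  qed simp
  then show ?thesis unfolding Qpk_def using assms by simp
qed

lemma eta_Qpk_pos: "p \<le> K \<Longrightarrow> configs w 0 K \<Longrightarrow> 0 < eta N (w p) (Qpk N G q w p K (\<lambda>_. 1))"
  using N_pos Qpk_pos by (intro eta_pos) (auto simp: configs_def config_def)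

lemma hpk_pos: "p \<le> K \<Longrightarrow> configs w 0 K \<Longrightarrow> y \<in> space S \<Longrightarrow> 0 < hpk N G q w p K y"
  using hpk_eq Qpk_pos eta_Qpk_pos by (simp add: divide_pos_pos)

text \<open>\<open>\<eta>\<^sub>p\<^sub>-\<^sub>1(Q\<^sub>p\<^sup>N f) = \<lambda>\<^sub>p\<^sub>-\<^sub>1 \<eta>\<^sub>p(f)\<close>: the normalisation in \<open>dens\<close> cancels the empirical mean.\<close>
lemma eta_Qop:
  assumes "1 \<le> p" "p \<le> K" "configs w 0 K"
  shows "eta N (w (p - 1)) (Qop N G q w p f) = eta N (w (p - 1)) G * eta N (w p) f"
proof -
  let ?y = "w (p - 1)" and ?z = "w p"
  let ?D = "\<lambda>j. eta N ?y (\<lambda>x. q x (?z j))"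
  let ?l = "eta N ?y G"
  have "config ?y" "config ?z" using assms by (auto simp: configs_def)
  then have Dpos: "0 < ?D j" if "j < N" for j
    using eta_q_pos that by (auto simp: config_def)
  have dd: "dens N G q w p x' x'' = q x' x'' * ?l / eta N ?y (\<lambda>x. q x x'')" for x' x''
    by (simp add: dens_def)
  have "eta N ?y (Qop N G q w p f) = (\<Sum>i<N. (\<Sum>j<N. q (?y i) (?z j) * ?l / ?D j * f (?z j)) / real N) / real N"
    unfolding eta_def[of N ?y] Qop_def eta_def[of N ?z] dd ..
  also have "\<dots> = (\<Sum>i<N. \<Sum>j<N. q (?y i) (?z j) / real N * (?l / ?D j * f (?z j))) / real N"
    by (simp add: sum_divide_distrib mult_ac)
  also have "\<dots> = (\<Sum>j<N. \<Sum>i<N. q (?y i) (?z j) / real N * (?l / ?D j * f (?z j))) / real N"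
    by (subst sum.swap) (rule refl)
  also have "\<dots> = (\<Sum>j<N. (\<Sum>i<N. q (?y i) (?z j)) / real N * (?l / ?D j * f (?z j))) / real N"
    by (simp add: sum_divide_distrib sum_distrib_right)
  also have "\<dots> = (\<Sum>j<N. ?l * f (?z j)) / real N"
  proof (intro arg_cong[where f="\<lambda>x. x / real N"] sum.cong refl)
    fix j assume "j \<in> {..<N}"
    then have "0 < ?D j" using Dpos by simp
    moreover have "(\<Sum>i<N. q (?y i) (?z j)) / real N = ?D j" by (simp add: eta_def)
    ultimately show "(\<Sum>i<N. q (?y i) (?z j)) / real N * (?l / ?D j * f (?z j)) = ?l * f (?z j)"
      by simp
  qed
  also have "\<dots> = ?l * eta N ?z f" by (simp add: eta_def sum_distrib_left)
  finally show ?thesis .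
qed

definition backward_weight :: "(nat \<Rightarrow> nat \<Rightarrow> 'a) \<Rightarrow> nat \<Rightarrow> nat \<Rightarrow> 'a \<Rightarrow> nat \<Rightarrow> real" where
  "backward_weight w P K y j = (if j < N then dens N G q w P y (w P j) * hpk N G q w P K (w P j)
     / (real N * lam N G w (P - 1) * hpk N G q w (P - 1) K y) else 0)"

lemma Pker_backward_weight: "Pker N G q w P K y = map_pmf (w P) (embed_pmf (backward_weight w P K y))"
  unfolding Pker_def backward_weight_def ..

lemma backward_weight_nonneg:
  assumes "1 \<le> P" "P \<le> K" "configs w 0 K" "y \<in> space S"
  shows "0 \<le> backward_weight w P K y j"
proof (cases "j < N")
  case True
  have P: "P = Suc (P - 1)" and "config (w (P - 1))" and wP: "w P j \<in> space S"
    using assms True by (auto simp: configs_def config_def)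
  then have "0 < dens N G q w P y (w P j)" using dens_pos[of w "P - 1", OF _ assms(4) wP] by simp
  moreover have "0 < hpk N G q w P K (w P j)" "0 < hpk N G q w (P - 1) K y"
    using hpk_pos assms wP by auto
  moreover have "0 < lam N G w (P - 1)" by (simp add: lam_def eta_G_pos)
  ultimately show ?thesis
    using True N_pos unfolding backward_weight_def
    by (auto intro!: divide_nonneg_pos mult_nonneg_nonneg mult_pos_pos less_imp_le)
qed (simp add: backward_weight_def)

text \<open>The backward kernels are Markov: this is where \<open>h\<^sub>p\<^sub>-\<^sub>1\<^sub>,\<^sub>K = Q\<^sub>p h\<^sub>p\<^sub>,\<^sub>K / \<lambda>\<^sub>p\<^sub>-\<^sub>1\<close> is used.\<close>
lemma backward_weight_sum:
  assumes "1 \<le> P" "P \<le> K" "configs w 0 K" "y \<in> space S"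
  shows "(\<Sum>j<N. backward_weight w P K y j) = 1"
proof -
  let ?A = "Qpk N G q w P K (\<lambda>_. 1)" and ?B = "Qpk N G q w (P - 1) K (\<lambda>_. 1)"
  let ?c = "eta N (w P) ?A" and ?l = "lam N G w (P - 1)"
  have pos: "0 < ?c" "0 < ?B y" "0 < ?l"
    using eta_Qpk_pos Qpk_pos assms by (auto simp: lam_def eta_G_pos)
  have B: "?B = Qop N G q w P ?A" using Qpk_step assms by simp
  have hP: "hpk N G q w P K = (\<lambda>x. ?A x / ?c)" using hpk_eq assms by simp
  have "hpk N G q w (P - 1) K y = ?B y / eta N (w (P - 1)) ?B"
    using hpk_eq[of "P - 1" K] assms by simp
  also have "eta N (w (P - 1)) ?B = ?l * ?c"
    unfolding B lam_def using eta_Qop assms by simp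
  finally have hP1: "hpk N G q w (P - 1) K y = ?B y / (?l * ?c)" .
  have "(\<Sum>j<N. dens N G q w P y (w P j) * hpk N G q w P K (w P j))
      = real N * Qop N G q w P (hpk N G q w P K) y"
    unfolding Qop_def eta_def using N_pos by simp
  also have "\<dots> = real N * (?B y / ?c)" unfolding hP Qop_div B ..
  finally have sum: "(\<Sum>j<N. dens N G q w P y (w P j) * hpk N G q w P K (w P j)) = real N * (?B y / ?c)" .
  have "(\<Sum>j<N. backward_weight w P K y j)
      = (\<Sum>j<N. dens N G q w P y (w P j) * hpk N G q w P K (w P j)) / (real N * ?l * hpk N G q w (P - 1) K y)"
    unfolding backward_weight_def by (simp add: sum_divide_distrib)
  also have "\<dots> = 1" unfolding sum hP1 using pos N_pos by (simp add: field_simps)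
  finally show ?thesis .
qed

lemma Pker_expectation:
  assumes "1 \<le> P" "P \<le> K" "configs w 0 K" "y \<in> space S"
  shows "measure_pmf.expectation (Pker N G q w P K y) \<phi> = (\<Sum>j<N. backward_weight w P K y j * \<phi> (w P j))"
    and "set_pmf (Pker N G q w P K y) \<subseteq> w P ` {..<N}"
proof -
  have "\<And>j. N \<le> j \<Longrightarrow> backward_weight w P K y j = 0" by (simp add: backward_weight_def)
  note weights = embed_pmf_finite_weights[OF backward_weight_nonneg[OF assms] this
      backward_weight_sum[OF assms], where h="w P"]
  show "measure_pmf.expectation (Pker N G q w P K y) \<phi> = (\<Sum>j<N. backward_weight w P K y j * \<phi> (w P j))"
    unfolding Pker_backward_weight by (rule weights(1))
  show "set_pmf (Pker N G q w P K y) \<subseteq> w P ` {..<N}"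
    unfolding Pker_backward_weight by (rule weights(2))
qed

text \<open>The weight of a path of the backward chain in the expectation of Proposition 7.\<close>
definition backward_factor :: "(nat \<Rightarrow> nat \<Rightarrow> 'a) \<Rightarrow> nat \<Rightarrow> nat \<Rightarrow> (nat \<Rightarrow> 'a) \<Rightarrow> real" where
  "backward_factor w n p xs = (\<Prod>r<p. lam N G w (n + r) / G (xs r))
     * (hpk N G q w n (2 * n) (xs 0) / hpk N G q w (n + p) (2 * n) (xs p))"

text \<open>The backward chain only visits particles, so its law has finite support in the state space.\<close>
lemma check_chain_support:
  assumes w: "configs w 0 (2 * n)" and x: "x \<in> space S"
  shows "p \<le> n \<Longrightarrow> finite (set_pmf (check_chain N G q w n x p)) \<and>
    (\<forall>xs\<in>set_pmf (check_chain N G q w n x p). xs p \<in> space S)"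
proof (induction p)
  case (Suc p)
  let ?P = "n + Suc p"
  have fin: "finite (set_pmf (check_chain N G q w n x p))"
    and sp: "\<And>xs. xs \<in> set_pmf (check_chain N G q w n x p) \<Longrightarrow> xs p \<in> space S"
    using Suc by auto
  have supp: "set_pmf (Pker N G q w ?P (2 * n) (xs p)) \<subseteq> w ?P ` {..<N}"
    if "xs \<in> set_pmf (check_chain N G q w n x p)" for xs
    using Pker_expectation(2)[OF _ _ w sp[OF that]] Suc.prems by simp
  have WS: "w ?P ` {..<N} \<subseteq> space S" using w Suc.prems by (auto simp: configs_def config_def)
  have "finite (set_pmf (Pker N G q w ?P (2 * n) (xs p)))" if "xs \<in> set_pmf (check_chain N G q w n x p)" for xs
    using supp[OF that] by (rule finite_subset) simp
  then have "finite (set_pmf (check_chain N G q w n x (Suc p)))" using fin by simp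
  moreover have "xs' (Suc p) \<in> space S" if "xs' \<in> set_pmf (check_chain N G q w n x (Suc p))" for xs'
  proof -
    from that obtain xs y where xs: "xs \<in> set_pmf (check_chain N G q w n x p)"
      and y: "y \<in> set_pmf (Pker N G q w ?P (2 * n) (xs p))" and xs': "xs' = xs(Suc p := y)"
      by auto
    show ?thesis using supp[OF xs] y WS xs' by auto
  qed
  ultimately show ?case by blast
qed (use x in simp)

text \<open>One step of the backward chain: the new weight times the new factor telescopes into
  the old factor times the coefficient of the particle step.\<close>
lemma backward_factor_step:
  assumes w: "configs w 0 (2 * n)" and p: "p < n" and y: "xs p \<in> space S" and j: "j < N"
  defines "z \<equiv> w (n + Suc p) j"
  shows "backward_weight w (n + Suc p) (2 * n) (xs p) j * backward_factor w n (Suc p) (xs(Suc p := z))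
    = backward_factor w n p xs * (dens N G q w (n + Suc p) (xs p) z / (real N * G (xs p)))"
proof -
  have z: "z \<in> space S" using w p j by (auto simp: z_def configs_def config_def)
  have "(\<Prod>r<p. lam N G w (n + r) / G ((xs(Suc p := z)) r)) = (\<Prod>r<p. lam N G w (n + r) / G (xs r))"
    by (intro prod.cong) auto
  moreover have "hpk N G q w (n + Suc p) (2 * n) z \<noteq> 0" "hpk N G q w (n + p) (2 * n) (xs p) \<noteq> 0"
    using hpk_pos[OF _ w z, of "n + Suc p"] hpk_pos[OF _ w y, of "n + p"] p by auto
  moreover have "lam N G w (n + p) \<noteq> 0" using eta_G_pos[of "w (n + p)"] by (simp add: lam_def)
  ultimately show ?thesis
    using j N_pos unfolding backward_factor_def backward_weight_def z_def by (simp add: field_simps)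
qed

lemma backward_transition:
  assumes w: "configs w 0 (2 * n)" and p: "p < n" and y: "xs p \<in> space S"
  shows "finite (set_pmf (map_pmf (\<lambda>y. xs(Suc p := y)) (Pker N G q w (n + Suc p) (2 * n) (xs p))))"
    and "measure_pmf.expectation (map_pmf (\<lambda>y. xs(Suc p := y)) (Pker N G q w (n + Suc p) (2 * n) (xs p)))
      (\<lambda>xs. backward_factor w n (Suc p) xs * g (xs (Suc p)) (\<Sum>r=1..Suc p. U (xs r)))
      = backward_factor w n p xs * particle_step w (n + Suc p) g (xs p) (\<Sum>r=1..p. U (xs r))"
proof -
  let ?P = "n + Suc p"
  have "set_pmf (Pker N G q w ?P (2 * n) (xs p)) \<subseteq> w ?P ` {..<N}"
    using Pker_expectation(2)[OF _ _ w y] p by simp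
  then have "finite (set_pmf (Pker N G q w ?P (2 * n) (xs p)))" by (rule finite_subset) simp
  then show "finite (set_pmf (map_pmf (\<lambda>y. xs(Suc p := y)) (Pker N G q w ?P (2 * n) (xs p))))" by simp
  let ?F = "\<lambda>xs. backward_factor w n (Suc p) xs * g (xs (Suc p)) (\<Sum>r=1..Suc p. U (xs r))"
  have "measure_pmf.expectation (map_pmf (\<lambda>y. xs(Suc p := y)) (Pker N G q w ?P (2 * n) (xs p))) ?F
      = (\<Sum>j<N. backward_weight w ?P (2 * n) (xs p) j * ?F (xs(Suc p := w ?P j)))"
    using Pker_expectation(1)[OF _ _ w y] p by simp
  also have "\<dots> = (\<Sum>j<N. backward_factor w n p xs * (dens N G q w ?P (xs p) (w ?P j)
      / (real N * G (xs p)) * g (w ?P j) ((\<Sum>r=1..p. U (xs r)) + U (w ?P j))))"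
    using backward_factor_step[of w n p xs, OF w p y]
    by (intro sum.cong refl) (simp add: sum_extend_last[where w=xs] mult.assoc[symmetric])
  finally show "measure_pmf.expectation (map_pmf (\<lambda>y. xs(Suc p := y)) (Pker N G q w ?P (2 * n) (xs p))) ?F
      = backward_factor w n p xs * particle_step w ?P g (xs p) (\<Sum>r=1..p. U (xs r))"
    by (simp add: particle_step_def sum_distrib_left)
qed

lemma check_chain_expectation:
  assumes w: "configs w 0 (2 * n)" and x: "x \<in> space S"
  shows "p \<le> n \<Longrightarrow> measure_pmf.expectation (check_chain N G q w n x p)
      (\<lambda>xs. backward_factor w n p xs * g (xs p) (\<Sum>r=1..p. U (xs r))) = particle_iter w n p x 0 g"
proof (induction p arbitrary: g)
  case 0
  have "0 < hpk N G q w n (2 * n) x" using hpk_pos[OF _ w x, of n] by simp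
  then show ?case by (simp add: backward_factor_def)
next
  case (Suc p)
  let ?cc = "check_chain N G q w n x p"
  have p: "p < n" using Suc.prems by simp
  have supp: "finite (set_pmf ?cc)" "\<And>xs. xs \<in> set_pmf ?cc \<Longrightarrow> xs p \<in> space S"
    using check_chain_support[OF w x, of p] p by auto
  let ?T = "\<lambda>xs. map_pmf (\<lambda>y. xs(Suc p := y)) (Pker N G q w (n + Suc p) (2 * n) (xs p))"
  let ?F = "\<lambda>xs. backward_factor w n (Suc p) xs * g (xs (Suc p)) (\<Sum>r=1..Suc p. U (xs r))"
  have fin: "finite (set_pmf (?T xs))" and step: "measure_pmf.expectation (?T xs) ?F
      = backward_factor w n p xs * particle_step w (n + Suc p) g (xs p) (\<Sum>r=1..p. U (xs r))"
    if "xs \<in> set_pmf ?cc" for xs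
    using backward_transition[of w n p xs, OF w p supp(2)[OF that]] by blast+
  have "measure_pmf.expectation (check_chain N G q w n x (Suc p)) ?F
      = measure_pmf.expectation ?cc (\<lambda>xs. measure_pmf.expectation (?T xs) ?F)"
    unfolding check_chain.simps by (rule expectation_bind_pmf_finite[OF supp(1) fin])
  also have "\<dots> = measure_pmf.expectation ?cc
      (\<lambda>xs. backward_factor w n p xs * particle_step w (Suc (n + p)) g (xs p) (\<Sum>r=1..p. U (xs r)))"
    using step by (intro expectation_cong_pmf) simp
  also have "\<dots> = particle_iter w n (Suc p) x 0 g"
    unfolding particle_iter_snoc using Suc.IH p by simp
  finally show ?case .
qed

lemma check_chain_reweighted:
  assumes "configs w 0 (2 * n)" "x \<in> space S" "m \<le> n"
  shows "measure_pmf.expectation (check_chain N G q w n x m)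
      (\<lambda>xs. (if (\<Sum>p=1..m. U (xs p)) > real m * \<delta> then 1 else 0) * (\<Prod>p<m. lam N G w (n + p) / G (xs p))
        * (hpk N G q w n (2 * n) (xs 0) / hpk N G q w (n + m) (2 * n) (xs m)))
    = particle_iter w n m x 0 (exceed (real m * \<delta>) 0)"
  using check_chain_expectation[OF assms, of "exceed (real m * \<delta>) 0"]
  by (simp add: backward_factor_def mult_ac)

end

lemma fk_setting_from_assumption_H:
  assumes "M \<in> S \<rightarrow>\<^sub>M prob_algebra S" "U \<in> borel_measurable S" "\<forall>y\<in>space S. \<bar>U y\<bar> \<le> 1"
    and "assumption_H S M (\<lambda>y. exp (\<alpha> * U y)) \<nu> q" "N \<ge> 1"
  obtains q_lo q_hi where "fk_setting S M U \<alpha> \<nu> q N q_lo q_hi"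
proof -
  obtain q_lo q_hi where H: "prob_space \<nu>" "sets \<nu> = sets S"
    "(\<lambda>(x, y). q x y) \<in> borel_measurable (S \<Otimes>\<^sub>M S)" "0 < q_lo" "0 < q_hi"
    "\<forall>x\<in>space S. \<forall>y\<in>space S. q_lo \<le> q x y \<and> q x y \<le> q_hi"
    "\<forall>x\<in>space S. \<forall>A\<in>sets S. exp (\<alpha> * U x) * measure (M x) A = (\<integral>y\<in>A. q x y \<partial>\<nu>)"
    using assms(4) unfolding assumption_H_def by (elim conjE exE) (rule that)
  have "fk_setting S M U \<alpha> \<nu> q N q_lo q_hi"
  proof (rule fk_setting.intro)
    show "\<And>x y. x \<in> space S \<Longrightarrow> y \<in> space S \<Longrightarrow> q_lo \<le> q x y \<and> q x y \<le> q_hi"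
      using H(6) by blast
    show "\<And>y. y \<in> space S \<Longrightarrow> \<bar>U y\<bar> \<le> 1"
      using assms(3) by blast
    show "\<And>x A. x \<in> space S \<Longrightarrow> A \<in> sets S \<Longrightarrow> exp (\<alpha> * U x) * measure (M x) A = (\<integral>y\<in>A. q x y \<partial>\<nu>)"
      using H(7) by blast
  qed (fact H assms(1,2,5))+
  then show ?thesis by (rule that)
qed

theorem proposition7:
  fixes S :: "'a measure" and M :: "'a \<Rightarrow> 'a measure" and U :: "'a \<Rightarrow> real"
    and \<alpha> :: real and \<nu> :: "'a measure" and q :: "'a \<Rightarrow> 'a \<Rightarrow> real"
    and \<mu> :: "'a measure" and N n m :: nat and x :: 'a and \<delta> :: real
  assumes "countably_generated_space S"
    and "M \<in> S \<rightarrow>\<^sub>M prob_algebra S"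
    and "U \<in> borel_measurable S" and "\<forall>y\<in>space S. \<bar>U y\<bar> \<le> 1"
    and "assumption_H S M (\<lambda>y. exp (\<alpha> * U y)) \<nu> q"
    and "prob_space \<mu>" and "sets \<mu> = sets S"
    and "N \<ge> 1" and "n \<ge> 1" and "1 \<le> m" and "m \<le> n"
    and "x \<in> space S" and "0 < \<delta>" and "\<delta> < 1"
  shows "(\<integral>w. measure_pmf.expectation
            (check_chain N (\<lambda>y. exp (\<alpha> * U y)) q w n x m)
            (\<lambda>xs. (if (\<Sum>p=1..m. U (xs p)) > real m * \<delta> then 1 else 0)
                  * (\<Prod>p<m. lam N (\<lambda>y. exp (\<alpha> * U y)) w (n + p) / exp (\<alpha> * U (xs p)))
                  * (hpk N (\<lambda>y. exp (\<alpha> * U y)) q w n (2 * n) (xs 0)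
                     / hpk N (\<lambda>y. exp (\<alpha> * U y)) q w (n + m) (2 * n) (xs m)))
          \<partial>particle_law S \<mu> M (\<lambda>y. exp (\<alpha> * U y)) N (2 * n))
         = pi_m S M U x m \<delta>"
proof -
  obtain q_lo q_hi where "fk_setting S M U \<alpha> \<nu> q N q_lo q_hi"
    using fk_setting_from_assumption_H assms(2-5,8) by blast
  then interpret fk_setting S M U \<alpha> \<nu> q N q_lo q_hi .
  have mu: "prob_space \<mu>" "sets \<mu> = sets S" and x: "x \<in> space S" and mn: "m \<le> n"
    using assms by auto
  have "\<And>w. w \<in> space (particle_law S \<mu> M G N (2 * n)) \<Longrightarrow> configs w 0 (2 * n)"
    using configs_W space_particle_law[OF mu] by simp
  then have "(\<integral>w. measure_pmf.expectation (check_chain N G q w n x m)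
            (\<lambda>xs. (if (\<Sum>p=1..m. U (xs p)) > real m * \<delta> then 1 else 0) * (\<Prod>p<m. lam N G w (n + p) / G (xs p))
              * (hpk N G q w n (2 * n) (xs 0) / hpk N G q w (n + m) (2 * n) (xs m)))
          \<partial>particle_law S \<mu> M G N (2 * n))
      = (\<integral>w. particle_iter w n m x 0 (exceed (real m * \<delta>) 0) \<partial>particle_law S \<mu> M G N (2 * n))"
    using check_chain_reweighted[OF _ x mn] by (intro Bochner_Integration.integral_cong) auto
  also have "\<dots> = exceed (real m * \<delta>) m x 0"
    by (rule particle_law_exceed[OF mu x mn])
  also have "\<dots> = pi_m S M U x m \<delta>"
    by (rule pi_m_exceed[OF x, symmetric])
  finally show ?thesis .
qed

end
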